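(* Let $n \ge 2$ and let $\lambda = a_1\omega_1 + \cdots + a_{2n-1}\omega_{2n-1}$ ($a_i \in \mathbb{Z}_{\ge 0}$) be a dominant weight of $\mathfrak{sl}(2n,\mathbb{C})$, and assume that either $n = 2$ or $\lambda = a_1\omega_1 + a_2\omega_2 + a_3\omega_3$. Let $\nu = b_1\omega_1 + \cdots + b_n\omega_n$ ($b_i \in \mathbb{Z}_{\ge 0}$). Then there is a bijection $$\operatorname{domres}(\lambda,\nu) \;\longleftrightarrow\; \bigcup_{\substack{\eta \text{ dominant},\ \text{shape of } \eta \subseteq \text{shape of } \lambda,\\ \text{shape of } \eta \text{ even}}} \operatorname{LR}(\lambda/\eta,\nu).$$
   Context: $\omega_i$ are the fundamental weights of $\mathfrak{sl}(2n,\mathbb{C})$, $\varepsilon_i$ ($1\le i\le 2n$) the standard weights with $\varepsilon_i(\operatorname{diag}(a_1,\dots,a_{2n}))=a_i$. The shape of a dominant weight $\mu=\sum c_i\omega_i$ is the Young diagram (left- and top-justified) with $c_i$ columns of length $i$, longer columns to the left; containment is as diagrams aligned at top-left corners; a shape is even if all its columns have even length. Let $\mathfrak{g}^\sigma \cong \mathfrak{sp}(2n,\mathbb{C})$ be the fixed points of the automorphism $\sigma$ of $\mathfrak{sl}(2n,\mathbb{C})$ induced by the folding $i \mapsto 2n-i$ of the $A_{2n-1}$ Dynkin diagram, with Cartan subalgebra $\mathfrak{h}^\sigma$ (the $\sigma$-fixed diagonal matrices). Set $\hat\varepsilon_i = \varepsilon_i|_{\mathfrak{h}^\sigma}$, so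 $\hat\varepsilon_{2n+1-i} = -\hat\varepsilon_i$; the fundamental weights of $\mathfrak{g}^\sigma$ are $\hat\omega_i = \hat\varepsilon_1+\cdots+\hat\varepsilon_i$, and $\hat\nu := b_1\hat\omega_1+\cdots+b_n\hat\omega_n$. Semi-standard Young tableaux of the shape of $\lambda$ have entries in $\{1,\dots,2n\}$, rows weakly increasing left to right, columns strictly increasing downward; the word of a tableau reads rows right to left, top row first. $\operatorname{domres}(\lambda)$ is the set of such tableaux $\mathscr{T}$ with word $w_1\cdots w_k$ such that for every prefix $w_1\cdots w_j$, writing $\sum_{l\le j}\hat\varepsilon_{w_l} = \sum_{i=1}^n c_i\hat\varepsilon_i$, one has $c_1\ge\cdots\ge c_n\ge 0$. $\operatorname{domres}(\lambda,\nu)$ is the set of $\mathscr{T}\in\operatorname{domres}(\lambda)$ with $\sum_{l=1}^k \hat\varepsilon_{w_l} = \hat\nu$. For dominant $\eta$ with shape contained in that of $\lambda$, $\operatorname{LR}(\lambda/\eta,\nu)$ is the set of fillings of the boxes of the shape of $\lambda$ not in the shape of $\eta$ with letters from $\{1,\dots,2n\}$, rows weakly increasing, columns strictly increasing, whose word (rows read right to left, top to bottom, ignoring empty boxes) is dominant (in every prefix the number of letters $i$ is at least the number of letters $i+1$, for all $i$) and has weight $\nu$ (the number of entries equal to $i$ equals the number of boxes in row $i$ of the shape of $\nu$). *)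

theory Defs
  imports Main
begin

text \<open>A dominant weight of sl(2n) is given by its coefficient function
  a :: nat \<Rightarrow> nat (coefficient of omega_i is a i, only i in 1..2n-1 is used).
  Boxes of Young diagrams are pairs (row, column), both 1-indexed.\<close>

definition row_len :: "nat \<Rightarrow> (nat \<Rightarrow> nat) \<Rightarrow> nat \<Rightarrow> nat" where
  "row_len n a r = (\<Sum>i\<in>{r..2*n-1}. a i)"

text \<open>Shape: c_i columns of length i, longer columns to the left; row r (1 \<le> r) has
  length a_r + ... + a_{2n-1}.\<close>
definition shape :: "nat \<Rightarrow> (nat \<Rightarrow> nat) \<Rightarrow> (nat \<times> nat) set" where
  "shape n a = {(r, c). 1 \<le> r \<and> r \<le> 2*n-1 \<and> 1 \<le> c \<and> c \<le> row_len n a r}"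

definition ss_filling :: "nat \<Rightarrow> (nat \<times> nat) set \<Rightarrow> (nat \<times> nat \<Rightarrow> nat) \<Rightarrow> bool" where
  "ss_filling n B T \<longleftrightarrow>
     (\<forall>x. x \<notin> B \<longrightarrow> T x = 0) \<and>
     (\<forall>x\<in>B. 1 \<le> T x \<and> T x \<le> 2*n) \<and>
     (\<forall>r c c'. (r, c) \<in> B \<longrightarrow> (r, c') \<in> B \<longrightarrow> c \<le> c' \<longrightarrow> T (r, c) \<le> T (r, c')) \<and>
     (\<forall>r r' c. (r, c) \<in> B \<longrightarrow> (r', c) \<in> B \<longrightarrow> r < r' \<longrightarrow> T (r, c) < T (r', c))"

definition reading_word :: "nat \<Rightarrow> nat \<Rightarrow> (nat \<times> nat) set \<Rightarrow> (nat \<times> nat \<Rightarrow> nat) \<Rightarrow> nat list" where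
  "reading_word R C B T =
     concat (map (\<lambda>r. map (\<lambda>c. T (r, c)) (filter (\<lambda>c. (r, c) \<in> B) (rev [1..<C+1]))) [1..<R+1])"

definition word_of :: "nat \<Rightarrow> (nat \<Rightarrow> nat) \<Rightarrow> (nat \<times> nat) set \<Rightarrow> (nat \<times> nat \<Rightarrow> nat) \<Rightarrow> nat list" where
  "word_of n a B T = reading_word (2*n-1) (row_len n a 1) B T"

text \<open>Coefficient c_i of hat-epsilon_i in the sum of hat-epsilon_{w_l} over a word,
  using hat-epsilon_{2n+1-i} = - hat-epsilon_i.\<close>
definition hat_coef :: "nat \<Rightarrow> nat list \<Rightarrow> nat \<Rightarrow> int" where
  "hat_coef n w i = int (count_list w i) - int (count_list w (2*n+1-i))"

definition domres :: "nat \<Rightarrow> (nat \<Rightarrow> nat) \<Rightarrow> (nat \<times> nat \<Rightarrow> nat) set" where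
  "domres n a = {T. ss_filling n (shape n a) T \<and>
     (\<forall>j \<le> length (word_of n a (shape n a) T).
        let p = take j (word_of n a (shape n a) T) in
          (\<forall>i\<in>{1..<n}. hat_coef n p i \<ge> hat_coef n p (i+1)) \<and> hat_coef n p n \<ge> 0)}"

text \<open>hat-nu = b_1 hat-omega_1 + ... + b_n hat-omega_n has hat-epsilon_i-coefficient
  b_i + ... + b_n.\<close>
definition domres_nu :: "nat \<Rightarrow> (nat \<Rightarrow> nat) \<Rightarrow> (nat \<Rightarrow> nat) \<Rightarrow> (nat \<times> nat \<Rightarrow> nat) set" where
  "domres_nu n a b = {T \<in> domres n a.
     \<forall>i\<in>{1..n}. hat_coef n (word_of n a (shape n a) T) i = int (\<Sum>k\<in>{i..n}. b k)}"

definition dominant_word :: "nat \<Rightarrow> nat list \<Rightarrow> bool" where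
  "dominant_word n w \<longleftrightarrow> (\<forall>j \<le> length w. \<forall>i\<in>{1..<2*n}.
      count_list (take j w) i \<ge> count_list (take j w) (i+1))"

text \<open>LR(lambda/eta, nu); nu = b_1 omega_1 + ... + b_n omega_n, row i of its shape has
  b_i + ... + b_n boxes (0 boxes for i > n).\<close>
definition LR :: "nat \<Rightarrow> (nat \<Rightarrow> nat) \<Rightarrow> (nat \<Rightarrow> nat) \<Rightarrow> (nat \<Rightarrow> nat) \<Rightarrow> (nat \<times> nat \<Rightarrow> nat) set" where
  "LR n a eta b = {T. ss_filling n (shape n a - shape n eta) T \<and>
     dominant_word n (word_of n a (shape n a - shape n eta) T) \<and>
     (\<forall>i\<in>{1..2*n}. count_list (word_of n a (shape n a - shape n eta) T) i =
         (if i \<le> n then (\<Sum>k\<in>{i..n}. b k) else 0))}"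

definition dom_weight :: "nat \<Rightarrow> (nat \<Rightarrow> nat) \<Rightarrow> bool" where
  "dom_weight n eta \<longleftrightarrow> (\<forall>i. (i = 0 \<or> 2*n \<le> i) \<longrightarrow> eta i = 0)"

text \<open>The shape is even iff it has no columns of odd length.\<close>
definition even_shape :: "(nat \<Rightarrow> nat) \<Rightarrow> bool" where
  "even_shape eta \<longleftrightarrow> (\<forall>i. odd i \<longrightarrow> eta i = 0)"

end

theory Submission
  imports Defs "HOL-Library.Sublist"
begin

text \<open>If \<open>\<lambda>\<close> has at most three rows, both sides of the bijection have at most one element.
  Reading the prefix conditions row by row forces every tableau in \<open>domres(\<lambda>,\<nu>)\<close> to have
  rows \<open>1\<dots>1\<close>, \<open>2\<dots>2 (2n)\<dots>(2n)\<close> and \<open>3\<dots>3 (2n-1)\<dots>(2n-1) (2n)\<dots>(2n)\<close>; the only even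
  shapes inside \<open>\<lambda>\<close> are those of \<open>k\<omega>\<^sub>2\<close>, and every filling in \<open>LR(\<lambda>/k\<omega>\<^sub>2,\<nu>)\<close> has
  rows \<open>1\<dots>1\<close>, \<open>2\<dots>2\<close> and \<open>1\<dots>1 2\<dots>2 3\<dots>3\<close>. In both cases the block sizes are the
  unique solution of a linear system determined by \<open>\<lambda>\<close> and \<open>\<nu>\<close>, and one system is
  solvable if and only if the other one is.\<close>

section \<open>Prefix conditions on words\<close>

definition all_prefixes :: "('a list \<Rightarrow> bool) \<Rightarrow> 'a list \<Rightarrow> bool" where
  "all_prefixes P w \<longleftrightarrow> (\<forall>p. prefix p w \<longrightarrow> P p)"

lemma all_prefixes_iff_take: "all_prefixes P w \<longleftrightarrow> (\<forall>j \<le> length w. P (take j w))"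
  unfolding all_prefixes_def
  by (metis prefix_def append_eq_conv_conj prefix_length_le take_is_prefix)

lemma all_prefixes_appendD: "all_prefixes P (u @ v) \<Longrightarrow> P u"
  unfolding all_prefixes_def by simp

definition blocks :: "(nat \<times> 'a) list \<Rightarrow> 'a list" where
  "blocks bs = concat (map (\<lambda>(k, v). replicate k v) bs)"

lemma blocks_simps [simp]:
  "blocks [] = []"
  "blocks ((k, v) # bs) = replicate k v @ blocks bs"
  "blocks (bs @ cs) = blocks bs @ blocks cs"
  by (simp_all add: blocks_def)

lemma all_prefixes_append_replicate:
  assumes "all_prefixes P w" "\<And>t. t \<le> k \<Longrightarrow> P (w @ replicate t v)"
  shows "all_prefixes P (w @ replicate k v)"
  unfolding all_prefixes_def
proof (intro allI impI)
  fix p assume "prefix p (w @ replicate k v)"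
  then consider "prefix p w" | us where "prefix us (replicate k v)" "p = w @ us"
    by (auto simp: prefix_append)
  then consider "prefix p w" | t where "t \<le> k" "p = w @ replicate t v"
  proof cases
    case (2 us)
    then have "us = replicate (min (length us) k) v"
      by (metis prefix_def append_eq_conv_conj take_replicate)
    with 2 that(2)[of "min (length us) k"] show ?thesis by simp
  qed auto
  then show "P p"
  proof cases
    case 1
    then show ?thesis using assms(1) by (simp add: all_prefixes_def)
  next
    case (2 t)
    then show ?thesis using assms(2) by simp
  qed
qed

text \<open>The prefix conditions used below are conjunctions of inequalities between additive
  functions of the word, which makes them convex in the sense of the first hypothesis.\<close>
lemma all_prefixes_blocks:
  assumes convex: "\<And>w k t v. P w \<Longrightarrow> P (w @ replicate k v) \<Longrightarrow> t \<le> k \<Longrightarrow> P (w @ replicate t v)"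
    and boundaries: "\<forall>p \<in> set (prefixes bs). P (blocks p)"
  shows "all_prefixes P (blocks bs)"
  using boundaries
proof (induction bs rule: rev_induct)
  case Nil
  then show ?case by (simp add: all_prefixes_def)
next
  case (snoc kv bs)
  obtain k v where kv: "kv = (k, v)" by force
  have IH: "all_prefixes P (blocks bs)"
    using snoc.IH snoc.prems by simp
  have "P (blocks bs)" "P (blocks bs @ replicate k v)"
    using snoc.prems kv by simp_all
  then have "P (blocks bs @ replicate t v)" if "t \<le> k" for t
    using convex that by blast
  then show ?case
    using all_prefixes_append_replicate[OF IH] kv by simp
qed

lemma nonneg_inside_replicate:
  fixes f :: "'a list \<Rightarrow> int"
  assumes additive: "\<And>xs ys. f (xs @ ys) = f xs + f ys"
    and "0 \<le> f w" "0 \<le> f (w @ replicate k v)" "t \<le> k"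
  shows "0 \<le> f (w @ replicate t v)"
proof -
  have "f [] = 0" using additive[of "[]" "[]"] by simp
  then have rep: "f (replicate s v) = int s * f [v]" for s
  proof (induction s)
    case (Suc s)
    have "f (replicate (Suc s) v) = f [v] + f (replicate s v)"
      using additive[of "[v]" "replicate s v"] by simp
    with Suc show ?case by (simp add: algebra_simps)
  qed simp
  have "min 0 (int k * f [v]) \<le> int t * f [v]"
  proof (cases "0 \<le> f [v]")
    case False
    then have "int k * f [v] \<le> int t * f [v]"
      using \<open>t \<le> k\<close> by (simp add: mult_right_mono_neg)
    then show ?thesis by (simp add: min_le_iff_disj)
  qed (simp add: min_le_iff_disj)
  then show ?thesis
    using assms(2,3) additive[of w "replicate t v"] additive[of w "replicate k v"] rep[of t] rep[of k]
    by linarith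
qed

definition sp_dominant :: "nat \<Rightarrow> nat list \<Rightarrow> bool" where
  "sp_dominant n p \<longleftrightarrow>
     (\<forall>i\<in>{1..<n}. hat_coef n p (i + 1) \<le> hat_coef n p i) \<and> 0 \<le> hat_coef n p n"

definition gl_dominant :: "nat \<Rightarrow> nat list \<Rightarrow> bool" where
  "gl_dominant n p \<longleftrightarrow> (\<forall>i\<in>{1..<2*n}. count_list p (i + 1) \<le> count_list p i)"

lemma domres_iff:
  "T \<in> domres n a \<longleftrightarrow>
     ss_filling n (shape n a) T \<and> all_prefixes (sp_dominant n) (word_of n a (shape n a) T)"
  by (simp add: domres_def all_prefixes_iff_take sp_dominant_def Let_def)

lemma dominant_word_iff: "dominant_word n w \<longleftrightarrow> all_prefixes (gl_dominant n) w"
  by (simp add: dominant_word_def all_prefixes_iff_take gl_dominant_def)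

lemma count_list_replicate [simp]: "count_list (replicate k x) y = (if x = y then k else 0)"
  by (induction k) auto

lemma hat_coef_append [simp]: "hat_coef n (xs @ ys) i = hat_coef n xs i + hat_coef n ys i"
  by (simp add: hat_coef_def)

lemma sp_dominant_inside_replicate:
  assumes "sp_dominant n w" "sp_dominant n (w @ replicate k v)" "t \<le> k"
  shows "sp_dominant n (w @ replicate t v)"
  unfolding sp_dominant_def
proof (intro conjI ballI)
  fix i assume i: "i \<in> {1..<n}"
  have "0 \<le> hat_coef n (w @ replicate t v) i - hat_coef n (w @ replicate t v) (i + 1)"
    by (rule nonneg_inside_replicate[where f = "\<lambda>p. hat_coef n p i - hat_coef n p (i + 1)"])
      (use assms i in \<open>auto simp: sp_dominant_def\<close>)
  then show "hat_coef n (w @ replicate t v) (i + 1) \<le> hat_coef n (w @ replicate t v) i"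
    by simp
next
  show "0 \<le> hat_coef n (w @ replicate t v) n"
    by (rule nonneg_inside_replicate[where f = "\<lambda>p. hat_coef n p n"])
      (use assms in \<open>auto simp: sp_dominant_def\<close>)
qed

lemma gl_dominant_inside_replicate:
  assumes "gl_dominant n w" "gl_dominant n (w @ replicate k v)" "t \<le> k"
  shows "gl_dominant n (w @ replicate t v)"
  unfolding gl_dominant_def
proof
  fix i assume i: "i \<in> {1..<2*n}"
  have "0 \<le> int (count_list (w @ replicate t v) i) - int (count_list (w @ replicate t v) (i + 1))"
  proof (rule nonneg_inside_replicate[where f = "\<lambda>p. int (count_list p i) - int (count_list p (i + 1))"])
    show "0 \<le> int (count_list w i) - int (count_list w (i + 1))"
      using bspec[OF assms(1)[unfolded gl_dominant_def] i] by linarith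
    show "0 \<le> int (count_list (w @ replicate k v) i) - int (count_list (w @ replicate k v) (i + 1))"
      using bspec[OF assms(2)[unfolded gl_dominant_def] i] by linarith
  qed (use assms(3) in simp_all)
  then show "count_list (w @ replicate t v) (i + 1) \<le> count_list (w @ replicate t v) i"
    by linarith
qed

lemma hat_coef_nonneg:
  assumes "sp_dominant n p" "1 \<le> i" "i \<le> n"
  shows "0 \<le> hat_coef n p i"
  using \<open>i \<le> n\<close> \<open>1 \<le> i\<close>
proof (induction i rule: inc_induct)
  case base
  then show ?case using assms(1) by (simp add: sp_dominant_def)
next
  case (step i)
  then have "hat_coef n p (Suc i) \<le> hat_coef n p i"
    using assms(1) by (simp add: sp_dominant_def)
  with step show ?case by simp
qed

text \<open>The letter \<open>2n+1-i\<close> has weight \<open>-\<epsilon>\<^sub>i\<close>, so it cannot occur without an \<open>i\<close>.\<close>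
lemma sp_dominant_barred_partner:
  assumes "sp_dominant n p" "v \<in> set p" "n < v" "v \<le> 2*n"
  shows "2*n + 1 - v \<in> set p"
proof (rule ccontr)
  assume "2*n + 1 - v \<notin> set p"
  moreover have "count_list p v \<noteq> 0" using assms(2) by (simp add: count_list_0_iff)
  ultimately have "hat_coef n p (2*n + 1 - v) < 0"
    using assms(3,4) by (simp add: hat_coef_def)
  moreover have "1 \<le> 2*n + 1 - v" and "2*n + 1 - v \<le> n"
    using assms(3,4) by arith+
  then have "0 \<le> hat_coef n p (2*n + 1 - v)"
    by (rule hat_coef_nonneg[OF assms(1)])
  ultimately show False by simp
qed

lemma sp_dominant_predecessor:
  assumes "sp_dominant n p" "v \<in> set p" "2 \<le> v" "v \<le> n" "2*n + 1 - v \<notin> set p"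
  shows "v - 1 \<in> set p"
proof (rule ccontr)
  assume "v - 1 \<notin> set p"
  then have "hat_coef n p (v - 1) \<le> 0" by (simp add: hat_coef_def)
  moreover have "hat_coef n p v > 0"
    using assms(2,5) count_list_0_iff[of p v] by (simp add: hat_coef_def)
  moreover have "v - 1 \<in> {1..<n}"
    using assms(3,4) by auto
  then have "hat_coef n p (v - 1 + 1) \<le> hat_coef n p (v - 1)"
    using assms(1) unfolding sp_dominant_def by blast
  ultimately show False using assms(3) by simp
qed

lemma gl_dominant_predecessor:
  assumes "gl_dominant n p" "v \<in> set p" "2 \<le> v" "v \<le> 2*n"
  shows "v - 1 \<in> set p"
proof (rule ccontr)
  assume "v - 1 \<notin> set p"
  moreover have "v - 1 \<in> {1..<2*n}"
    using assms(3,4) by auto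
  then have "count_list p (v - 1 + 1) \<le> count_list p (v - 1)"
    using assms(1) unfolding gl_dominant_def by blast
  ultimately show False
    using assms(2,3) count_list_0_iff[of p v] by simp
qed

lemma sorted_two_values:
  assumes "sorted xs" "set xs \<subseteq> {u, v}" "u < v"
  shows "\<exists>i j. xs = replicate i u @ replicate j v"
  using assms
proof (induction xs)
  case Nil
  then show ?case by simp
next
  case (Cons x ys)
  show ?case
  proof (cases "x = u")
    case True
    with Cons obtain i j where "ys = replicate i u @ replicate j v" by auto
    with True have "x # ys = replicate (Suc i) u @ replicate j v" by simp
    then show ?thesis by blast
  next
    case False
    with Cons.prems have "\<forall>y \<in> set (x # ys). y = v" by fastforce
    then have "x # ys = replicate 0 u @ replicate (length (x # ys)) v"
      by (simp add: replicate_length_same)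
    then show ?thesis by blast
  qed
qed

lemma sorted_three_values:
  assumes "sorted xs" "set xs \<subseteq> {u, v, w}" "u < v" "v < w"
  shows "\<exists>i j k. xs = replicate i u @ replicate j v @ replicate k w"
  using assms
proof (induction xs)
  case Nil
  then show ?case by simp
next
  case (Cons x ys)
  show ?case
  proof (cases "x = u")
    case True
    with Cons obtain i j k where "ys = replicate i u @ replicate j v @ replicate k w" by auto
    with True have "x # ys = replicate (Suc i) u @ replicate j v @ replicate k w" by simp
    then show ?thesis by blast
  next
    case False
    with Cons.prems have "set (x # ys) \<subseteq> {v, w}" by fastforce
    then obtain j k where "x # ys = replicate j v @ replicate k w"
      using sorted_two_values Cons.prems by blast
    then have "x # ys = replicate 0 u @ replicate j v @ replicate k w" by simp
    then show ?thesis by blast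
  qed
qed

lemma sorted_dropWhile_less_ge:
  assumes "sorted xs" "y \<in> set (dropWhile (\<lambda>x. x < v) xs)"
  shows "v \<le> (y :: 'a :: linorder)"
  using assms
proof (induction xs)
  case (Cons x xs)
  then show ?case by (auto split: if_splits)
qed simp

text \<open>Rows are read from right to left, so for a weakly increasing row \<open>X\<close> this is the prefix
  of the reading word ending at the leftmost entry \<open>v\<close> of \<open>X\<close>.\<close>
lemma all_prefixes_upto_letter:
  assumes "all_prefixes P (Q @ rev X @ R)"
  shows "P (Q @ rev (dropWhile (\<lambda>x. x < v) X))"
proof -
  have "Q @ rev X @ R = (Q @ rev (dropWhile (\<lambda>x. x < v) X)) @ rev (takeWhile (\<lambda>x. x < v) X) @ R"
    by (metis append.assoc rev_append takeWhile_dropWhile_id)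
  with assms show ?thesis by (metis all_prefixes_appendD)
qed

lemma in_dropWhile_less: "(v :: 'a :: order) \<in> set xs \<Longrightarrow> v \<in> set (dropWhile (\<lambda>x. x < v) xs)"
  by (induction xs) auto

lemma row_barred_partner:
  assumes "all_prefixes (sp_dominant n) (Q @ rev X @ R)" "sorted X" "v \<in> set X" "n < v" "v \<le> 2*n"
  shows "2*n + 1 - v \<in> set Q"
proof -
  let ?S = "rev (dropWhile (\<lambda>x. x < v) X)"
  have "2*n + 1 - v \<in> set (Q @ ?S)"
    using sp_dominant_barred_partner[OF all_prefixes_upto_letter[OF assms(1)]] assms(3-5)
    by (simp add: in_dropWhile_less)
  moreover have "2*n + 1 - v \<notin> set ?S"
    using sorted_dropWhile_less_ge[OF assms(2)] assms(4) by fastforce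
  ultimately show ?thesis by simp
qed

lemma row_predecessor_sp:
  assumes "all_prefixes (sp_dominant n) (Q @ rev X @ R)" "sorted X" "v \<in> set X"
    and "2 \<le> v" "v \<le> n" "2*n + 1 - v \<notin> set Q" "2*n + 1 - v \<notin> set X"
  shows "v - 1 \<in> set Q"
proof -
  let ?S = "rev (dropWhile (\<lambda>x. x < v) X)"
  have "2*n + 1 - v \<notin> set ?S"
    using assms(7) set_dropWhileD by fastforce
  then have "v - 1 \<in> set (Q @ ?S)"
    using sp_dominant_predecessor[OF all_prefixes_upto_letter[OF assms(1)]] assms(3-6)
    by (simp add: in_dropWhile_less)
  moreover have "v - 1 \<notin> set ?S"
    using sorted_dropWhile_less_ge[OF assms(2)] assms(4) by fastforce
  ultimately show ?thesis by simp
qed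

lemma row_predecessor_gl:
  assumes "all_prefixes (gl_dominant n) (Q @ rev X @ R)" "sorted X" "v \<in> set X"
    and "2 \<le> v" "v \<le> 2*n"
  shows "v - 1 \<in> set Q"
proof -
  let ?S = "rev (dropWhile (\<lambda>x. x < v) X)"
  have "v - 1 \<in> set (Q @ ?S)"
    using gl_dominant_predecessor[OF all_prefixes_upto_letter[OF assms(1)]] assms(3-5)
    by (simp add: in_dropWhile_less)
  moreover have "v - 1 \<notin> set ?S"
    using sorted_dropWhile_less_ge[OF assms(2)] assms(4) by fastforce
  ultimately show ?thesis by simp
qed

lemma sp_first_row_letters:
  assumes "all_prefixes (sp_dominant n) (rev X @ R)" "sorted X" "set X \<subseteq> {1..2*n}"
  shows "set X \<subseteq> {1}"
proof
  fix v assume v: "v \<in> set X"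
  have no_barred: "w \<le> n" if "w \<in> set X" for w
    using row_barred_partner[of n "[]" X R w] assms that by fastforce
  show "v \<in> {1}"
  proof (rule ccontr)
    assume "v \<notin> {1}"
    then have "2 \<le> v" "v \<le> n" using v assms(3) no_barred by auto
    moreover have "2*n + 1 - v \<notin> set X" using no_barred \<open>v \<le> n\<close> by fastforce
    ultimately show False
      using row_predecessor_sp[of n "[]" X R v] assms v by simp
  qed
qed

lemma sp_second_row_letters:
  assumes "all_prefixes (sp_dominant n) (Q @ rev X @ R)" "sorted X" "set X \<subseteq> {2..2*n}"
    and "set Q \<subseteq> {1}"
  shows "set X \<subseteq> {2, 2*n}"
proof
  fix v assume v: "v \<in> set X"
  have barred: "w = 2*n" if "w \<in> set X" "n < w" for w
    using row_barred_partner[OF assms(1,2) that] that assms(3,4) by fastforce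
  show "v \<in> {2, 2*n}"
  proof (rule ccontr)
    assume "v \<notin> {2, 2*n}"
    then have "3 \<le> v" "v \<le> n" using v assms(3) barred by fastforce+
    moreover have "2*n + 1 - v \<notin> set X" "2*n + 1 - v \<notin> set Q"
      using barred \<open>3 \<le> v\<close> \<open>v \<le> n\<close> assms(4) by fastforce+
    ultimately show False
      using row_predecessor_sp[OF assms(1,2) v] assms(4) by fastforce
  qed
qed

lemma sp_third_row_letters:
  assumes "all_prefixes (sp_dominant n) (Q @ rev X @ R)" "sorted X" "set X \<subseteq> {3..2*n}"
    and "set Q \<subseteq> {1, 2, 2*n}"
  shows "set X \<subseteq> {3, 2*n - 1, 2*n}"
proof
  fix v assume v: "v \<in> set X"
  have barred: "w = 2*n - 1 \<or> w = 2*n" if "w \<in> set X" "n < w" for w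
    using row_barred_partner[OF assms(1,2) that] that assms(3,4) by fastforce
  show "v \<in> {3, 2*n - 1, 2*n}"
  proof (rule ccontr)
    assume "v \<notin> {3, 2*n - 1, 2*n}"
    then have "4 \<le> v" "v \<le> n" using v assms(3) barred by fastforce+
    moreover have "2*n + 1 - v \<notin> set X" "2*n + 1 - v \<notin> set Q"
      using barred \<open>4 \<le> v\<close> \<open>v \<le> n\<close> assms(4) by fastforce+
    ultimately show False
      using row_predecessor_sp[OF assms(1,2) v] assms(4) by fastforce
  qed
qed

lemma gl_row_letters:
  assumes "all_prefixes (gl_dominant n) (Q @ rev X @ R)" "sorted X" "set X \<subseteq> {l..2*n}"
    and "set Q \<subseteq> {1..m}" "1 \<le> l"
  shows "set X \<subseteq> {l..m + 1}"
proof
  fix v assume v: "v \<in> set X"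
  have "v \<le> m + 1"
  proof (cases "2 \<le> v")
    case True
    then show ?thesis
      using row_predecessor_gl[OF assms(1,2) v] v assms(3,4) by fastforce
  qed simp
  then show "v \<in> {l..m + 1}" using v assms(3) by auto
qed

lemma hat_coef_small_letters:
  assumes "2 \<le> n" "set w \<subseteq> {1, 2, 3, 2*n - 1, 2*n}"
  shows "hat_coef n w 1 = int (count_list w 1) - int (count_list w (2*n))"
    and "hat_coef n w 2 = int (count_list w 2) - int (count_list w (2*n - 1))"
    and "3 \<le> n \<Longrightarrow> hat_coef n w 3 = int (count_list w 3)"
    and "4 \<le> i \<Longrightarrow> i \<le> n \<Longrightarrow> hat_coef n w i = 0"
proof -
  show "hat_coef n w 1 = int (count_list w 1) - int (count_list w (2*n))"
    "hat_coef n w 2 = int (count_list w 2) - int (count_list w (2*n - 1))"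
    by (simp_all add: hat_coef_def)
  show "hat_coef n w 3 = int (count_list w 3)" if "3 \<le> n"
  proof -
    have "2*n + 1 - 3 \<notin> set w" using assms(2) that by auto
    then show ?thesis by (simp add: hat_coef_def)
  qed
  show "hat_coef n w i = 0" if "4 \<le> i" "i \<le> n"
  proof -
    have "i \<notin> set w" "2*n + 1 - i \<notin> set w" using assms(2) that by auto
    then show ?thesis by (simp add: hat_coef_def)
  qed
qed

lemma sp_dominant_small_lettersI:
  assumes "2 \<le> n" "set w \<subseteq> {1, 2, 3, 2*n - 1, 2*n}"
    and "hat_coef n w 2 \<le> hat_coef n w 1" "0 \<le> hat_coef n w 2"
    and "3 \<le> n \<Longrightarrow> hat_coef n w 3 \<le> hat_coef n w 2"
  shows "sp_dominant n w"
proof -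
  note h = hat_coef_small_letters[OF assms(1,2)]
  have step: "hat_coef n w (i + 1) \<le> hat_coef n w i" if "1 \<le> i" "i < n" for i
  proof (cases "4 \<le> i")
    case True
    then show ?thesis using h(4)[of i] h(4)[of "i + 1"] that by simp
  next
    case False
    then have "i = 1 \<or> i = 2 \<or> i = 3" using that by presburger
    then consider "i = 1" | "i = 2" | "i = 3" by blast
    then show ?thesis
    proof cases
      case 1
      show ?thesis unfolding 1 one_add_one by (rule assms(3))
    next
      case 2
      then have "3 \<le> n" using that by simp
      then show ?thesis unfolding 2 using assms(5) by simp
    next
      case 3
      then have "4 \<le> n" using that by simp
      then show ?thesis unfolding 3 using h(3) h(4)[of 4] by simp
    qed
  qed
  have "0 \<le> hat_coef n w n"
  proof -
    consider "n = 2" | "n = 3" | "4 \<le> n" using assms(1) by force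
    then show ?thesis by cases (use assms(4) h in auto)
  qed
  with step show ?thesis by (simp add: sp_dominant_def)
qed

lemma gl_dominant_small_lettersI:
  assumes "set w \<subseteq> {1, 2, 3}" "count_list w 2 \<le> count_list w 1" "count_list w 3 \<le> count_list w 2"
  shows "gl_dominant n w"
  unfolding gl_dominant_def
proof
  fix i :: nat assume "i \<in> {1..<2*n}"
  then consider "i = 1" | "i = 2" | "3 \<le> i" by force
  then show "count_list w (i + 1) \<le> count_list w i"
  proof cases
    case 3
    then have "i + 1 \<notin> set w" using assms(1) by auto
    then show ?thesis by simp
  qed (use assms in \<open>simp_all add: numeral_2_eq_2 numeral_3_eq_3\<close>)
qed

lemma gl_dominant_small_lettersD:
  assumes "gl_dominant n w" "2 \<le> n"
  shows "count_list w 2 \<le> count_list w 1" "count_list w 3 \<le> count_list w 2"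
proof -
  have "1 \<in> {1..<2*n}" "2 \<in> {1..<2*n}"
    using assms(2) by auto
  then have one: "count_list w (1 + 1) \<le> count_list w 1"
    and two: "count_list w (2 + 1) \<le> count_list w 2"
    using assms(1) unfolding gl_dominant_def by blast+
  from one show "count_list w 2 \<le> count_list w 1"
    by (simp only: one_add_one)
  from two show "count_list w 3 \<le> count_list w 2"
    by simp
qed

section \<open>Fillings given row by row\<close>

definition boxes :: "nat \<Rightarrow> (nat \<Rightarrow> nat) \<Rightarrow> (nat \<Rightarrow> nat) \<Rightarrow> (nat \<times> nat) set" where
  "boxes R lo hi = {(r, c). 1 \<le> r \<and> r \<le> R \<and> lo r < c \<and> c \<le> hi r}"

lemma shape_eq_boxes: "shape n a = boxes (2*n - 1) (\<lambda>_. 0) (row_len n a)"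
  by (auto simp: shape_def boxes_def)

lemma shape_diff_eq_boxes: "shape n a - shape n eta = boxes (2*n - 1) (row_len n eta) (row_len n a)"
  by (auto simp: shape_def boxes_def)

definition row :: "(nat \<times> nat \<Rightarrow> nat) \<Rightarrow> nat \<Rightarrow> nat \<Rightarrow> nat \<Rightarrow> nat list" where
  "row T r lo hi = map (\<lambda>c. T (r, c)) [Suc lo..<Suc hi]"

lemma set_row: "set (row T r lo hi) = {T (r, c) | c. lo < c \<and> c \<le> hi}"
  by (auto simp: row_def simp del: upt_Suc)

lemma length_row [simp]: "length (row T r lo hi) = hi - lo"
  by (simp add: row_def del: upt_Suc)

lemma reading_word_boxes:
  assumes "\<And>r. 1 \<le> r \<Longrightarrow> r \<le> R \<Longrightarrow> hi r \<le> C"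
  shows "reading_word R C (boxes R lo hi) T = concat (map (\<lambda>r. rev (row T r (lo r) (hi r))) [1..<R+1])"
  unfolding reading_word_def
proof (rule arg_cong[where f = concat], rule map_cong[OF refl])
  fix r assume r: "r \<in> set [1..<R+1]"
  have "filter (\<lambda>c. (r, c) \<in> boxes R lo hi) (rev [1..<C+1]) = rev (filter (\<lambda>c. lo r < c \<and> c \<le> hi r) [1..<C+1])"
    using r by (auto simp: boxes_def rev_filter simp del: upt_Suc intro!: filter_cong)
  also have "filter (\<lambda>c. lo r < c \<and> c \<le> hi r) [1..<C+1] = [Suc (lo r)..<Suc (hi r)]"
  proof (rule sorted_distinct_set_unique)
    show "set (filter (\<lambda>c. lo r < c \<and> c \<le> hi r) [1..<C+1]) = set [Suc (lo r)..<Suc (hi r)]"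
      using r assms[of r] by (auto simp del: upt_Suc)
  qed (simp_all add: sorted_wrt_filter del: upt_Suc)
  finally show "map (\<lambda>c. T (r, c)) (filter (\<lambda>c. (r, c) \<in> boxes R lo hi) (rev [1..<C+1]))
      = rev (row T r (lo r) (hi r))"
    by (simp add: row_def rev_map del: upt_Suc)
qed

lemma fun_eq_by_rows:
  assumes "\<And>x. x \<notin> boxes R lo hi \<Longrightarrow> T1 x = 0" "\<And>x. x \<notin> boxes R lo hi \<Longrightarrow> T2 x = 0"
    and "\<And>r. 1 \<le> r \<Longrightarrow> r \<le> R \<Longrightarrow> row T1 r (lo r) (hi r) = row T2 r (lo r) (hi r)"
  shows "T1 = T2"
proof
  fix x :: "nat \<times> nat"
  obtain r c where x: "x = (r, c)" by force
  show "T1 x = T2 x"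
  proof (cases "x \<in> boxes R lo hi")
    case True
    then have "1 \<le> r" "r \<le> R" "c \<in> set [Suc (lo r)..<Suc (hi r)]"
      by (auto simp: boxes_def x simp del: upt_Suc)
    with assms(3) show ?thesis
      unfolding x row_def map_eq_conv by blast
  qed (simp add: assms(1,2))
qed

lemma ss_filling_rows:
  assumes "ss_filling n (boxes R lo hi) T" "1 \<le> r" "r \<le> R"
  shows "sorted (row T r (lo r) (hi r))" and "set (row T r (lo r) (hi r)) \<subseteq> {1..2*n}"
proof -
  have box: "(r, c) \<in> boxes R lo hi" if "lo r < c" "c \<le> hi r" for c
    using that assms(2,3) by (simp add: boxes_def)
  then show "set (row T r (lo r) (hi r)) \<subseteq> {1..2*n}"
    using assms(1) unfolding ss_filling_def set_row by auto
  have "T (r, Suc (lo r) + i) \<le> T (r, Suc (lo r) + j)" if "i \<le> j" "j < hi r - lo r" for i j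
    using assms(1) box[of "Suc (lo r) + i"] box[of "Suc (lo r) + j"] that
    unfolding ss_filling_def by simp
  then show "sorted (row T r (lo r) (hi r))"
    by (simp add: row_def sorted_iff_nth_mono del: upt_Suc)
qed

definition row_filling :: "(nat \<Rightarrow> nat) \<Rightarrow> (nat \<Rightarrow> nat list) \<Rightarrow> nat \<times> nat \<Rightarrow> nat" where
  "row_filling lo X =
     (\<lambda>(r, c). if lo r < c \<and> c \<le> lo r + length (X r) then X r ! (c - Suc (lo r)) else 0)"

lemma row_row_filling: "row (row_filling lo X) r (lo r) (lo r + length (X r)) = X r"
  by (rule nth_equalityI) (auto simp: row_def row_filling_def simp del: upt_Suc)

lemma row_filling_in_set:
  "lo r < c \<Longrightarrow> c \<le> lo r + length (X r) \<Longrightarrow> row_filling lo X (r, c) \<in> set (X r)"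
  by (simp add: row_filling_def)

lemma mem_boxes_row_filling_iff:
  assumes "\<And>r. 1 \<le> r \<Longrightarrow> r \<le> R \<Longrightarrow> lo r + length (X r) = hi r"
    and "\<And>r. \<not> (1 \<le> r \<and> r \<le> R) \<Longrightarrow> X r = []"
  shows "(r, c) \<in> boxes R lo hi \<longleftrightarrow> lo r < c \<and> c \<le> lo r + length (X r)"
  using assms by (cases "1 \<le> r \<and> r \<le> R") (auto simp: boxes_def)

lemma eq_row_filling:
  assumes "ss_filling n (boxes R lo hi) T"
    and "\<And>r. 1 \<le> r \<Longrightarrow> r \<le> R \<Longrightarrow> lo r + length (X r) = hi r"
    and "\<And>r. \<not> (1 \<le> r \<and> r \<le> R) \<Longrightarrow> X r = []"
    and "\<And>r. 1 \<le> r \<Longrightarrow> r \<le> R \<Longrightarrow> row T r (lo r) (hi r) = X r"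
  shows "T = row_filling lo X"
proof (rule fun_eq_by_rows)
  show "T x = 0" if "x \<notin> boxes R lo hi" for x
    using assms(1) that unfolding ss_filling_def by blast
  show "row_filling lo X x = 0" if "x \<notin> boxes R lo hi" for x
    using that mem_boxes_row_filling_iff[OF assms(2,3)] by (cases x) (auto simp: row_filling_def)
  show "row T r (lo r) (hi r) = row (row_filling lo X) r (lo r) (hi r)" if "1 \<le> r" "r \<le> R" for r
    using assms(2,4)[OF that] row_row_filling[of lo X r] by simp
qed

lemma ss_filling_row_filling:
  assumes lengths: "\<And>r. 1 \<le> r \<Longrightarrow> r \<le> R \<Longrightarrow> lo r + length (X r) = hi r"
    and outside: "\<And>r. \<not> (1 \<le> r \<and> r \<le> R) \<Longrightarrow> X r = []"
    and sorted: "\<And>r. sorted (X r)"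
    and letters: "\<And>r. set (X r) \<subseteq> {1..2*n}"
    and columns: "\<And>r r' c. (r, c) \<in> boxes R lo hi \<Longrightarrow> (r', c) \<in> boxes R lo hi \<Longrightarrow> r < r' \<Longrightarrow>
        row_filling lo X (r, c) < row_filling lo X (r', c)"
  shows "ss_filling n (boxes R lo hi) (row_filling lo X)"
proof -
  have boxes: "(r, c) \<in> boxes R lo hi \<longleftrightarrow> lo r < c \<and> c \<le> lo r + length (X r)" for r c
    by (rule mem_boxes_row_filling_iff[OF lengths outside])
  have "row_filling lo X (r, c) \<le> row_filling lo X (r, c')"
    if "(r, c) \<in> boxes R lo hi" "(r, c') \<in> boxes R lo hi" "c \<le> c'" for r c c'
    using that sorted[of r] by (auto simp: boxes row_filling_def sorted_iff_nth_mono)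
  moreover have "row_filling lo X (r, c) \<in> {1..2*n}" if "(r, c) \<in> boxes R lo hi" for r c
    using that letters[of r] row_filling_in_set[of lo r c X] by (auto simp: boxes)
  ultimately show ?thesis
    unfolding ss_filling_def using columns
    by (auto simp: boxes row_filling_def)
qed

section \<open>Shapes with at most three rows\<close>

lemma row_len_antimono: "r \<le> r' \<Longrightarrow> row_len n a r' \<le> row_len n a r"
  unfolding row_len_def by (rule sum_mono2) auto

locale three_rows =
  fixes n :: nat and a :: "nat \<Rightarrow> nat"
  assumes two_le_n: "2 \<le> n"
    and row_len_eq_0: "\<And>r. 4 \<le> r \<Longrightarrow> row_len n a r = 0"
begin

lemma word_of_boxes:
  "word_of n a (boxes (2*n - 1) lo (row_len n a)) T =
     rev (row T 1 (lo 1) (row_len n a 1)) @ rev (row T 2 (lo 2) (row_len n a 2)) @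
     rev (row T 3 (lo 3) (row_len n a 3))"
proof -
  have "word_of n a (boxes (2*n - 1) lo (row_len n a)) T =
      concat (map (\<lambda>r. rev (row T r (lo r) (row_len n a r))) [1..<2*n - 1 + 1])"
    unfolding word_of_def by (rule reading_word_boxes) (simp add: row_len_antimono)
  also have "[1..<2*n - 1 + 1] = [1..<4] @ [4..<2*n]"
    using two_le_n upt_add_eq_append[of 1 4 "2*n - 4"] by simp
  also have "[1..<4] = [1, 2, 3 :: nat]"
    by (simp add: upt_rec)
  finally show ?thesis
    by (simp add: row_def row_len_eq_0)
qed

lemma mem_boxes_iff:
  "(r, c) \<in> boxes (2*n - 1) lo (row_len n a) \<longleftrightarrow>
     (r = 1 \<or> r = 2 \<or> r = 3) \<and> lo r < c \<and> c \<le> row_len n a r"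
  using two_le_n row_len_eq_0[of r] by (cases "4 \<le> r") (auto simp: boxes_def)

lemma letters_distinct:
  "2*n \<noteq> 1" "2*n \<noteq> 2" "2*n \<noteq> 3" "2*n - 1 \<noteq> 1" "2*n - 1 \<noteq> 2" "2*n - 1 \<noteq> 2*n"
  "1 \<noteq> 2*n" "2 \<noteq> 2*n" "3 \<noteq> 2*n" "1 \<noteq> 2*n - 1" "2 \<noteq> 2*n - 1" "2*n \<noteq> 2*n - 1"
  using two_le_n by auto

lemma three_eq_iff: "3 = 2*n - 1 \<longleftrightarrow> n = 2" "2*n - 1 = 3 \<longleftrightarrow> n = 2"
  using two_le_n by auto

lemma ss_filling_three_rows:
  assumes "ss_filling n (boxes (2*n - 1) lo (row_len n a)) T" "i \<in> {1, 2, 3}"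
  shows "sorted (row T i (lo i) (row_len n a i))"
    and "set (row T i (lo i) (row_len n a i)) \<subseteq> {1..2*n}"
proof -
  have "1 \<le> i" "i \<le> 2*n - 1" using assms(2) two_le_n by auto
  then show "sorted (row T i (lo i) (row_len n a i))"
    and "set (row T i (lo i) (row_len n a i)) \<subseteq> {1..2*n}"
    by (rule ss_filling_rows[OF assms(1)])+
qed

lemma three_rows_lengths:
  assumes "\<And>i. i \<notin> {1, 2, 3} \<Longrightarrow> X i = []" "\<And>i. 4 \<le> i \<Longrightarrow> lo i = 0"
    and "\<And>i. i \<in> {1, 2, 3} \<Longrightarrow> lo i + length (X i) = row_len n a i"
  shows "1 \<le> i \<Longrightarrow> i \<le> 2*n - 1 \<Longrightarrow> lo i + length (X i) = row_len n a i"
    and "\<not> (1 \<le> i \<and> i \<le> 2*n - 1) \<Longrightarrow> X i = []"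
proof -
  show "lo i + length (X i) = row_len n a i" if "1 \<le> i" "i \<le> 2*n - 1"
  proof (cases "i \<in> {1, 2, 3}")
    case False
    with that(1) have "4 \<le> i" by auto
    with False show ?thesis using assms(1,2) row_len_eq_0 by simp
  qed (rule assms(3))
  show "X i = []" if "\<not> (1 \<le> i \<and> i \<le> 2*n - 1)"
    using that two_le_n by (intro assms(1)) auto
qed

lemma ss_filling_row_filling_three_rows:
  assumes "\<And>i. i \<notin> {1, 2, 3} \<Longrightarrow> X i = []" "\<And>i. 4 \<le> i \<Longrightarrow> lo i = 0"
    and "\<And>i. i \<in> {1, 2, 3} \<Longrightarrow> lo i + length (X i) = row_len n a i"
    and "\<And>i. sorted (X i)" "\<And>i. set (X i) \<subseteq> {1..2*n}"
    and "\<And>i i' c. (i, c) \<in> boxes (2*n - 1) lo (row_len n a) \<Longrightarrow>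
        (i', c) \<in> boxes (2*n - 1) lo (row_len n a) \<Longrightarrow> i < i' \<Longrightarrow>
        row_filling lo X (i, c) < row_filling lo X (i', c)"
  shows "ss_filling n (boxes (2*n - 1) lo (row_len n a)) (row_filling lo X)"
  by (rule ss_filling_row_filling[OF three_rows_lengths[OF assms(1-3)] assms(4-6)])

lemma eq_row_filling_three_rows:
  assumes "ss_filling n (boxes (2*n - 1) lo (row_len n a)) T"
    and "\<And>i. i \<notin> {1, 2, 3} \<Longrightarrow> X i = []" "\<And>i. 4 \<le> i \<Longrightarrow> lo i = 0"
    and "\<And>i. i \<in> {1, 2, 3} \<Longrightarrow> lo i \<le> row_len n a i"
    and rows: "\<And>i. i \<in> {1, 2, 3} \<Longrightarrow> row T i (lo i) (row_len n a i) = X i"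
  shows "T = row_filling lo X"
proof -
  have lengths: "lo i + length (X i) = row_len n a i" if "i \<in> {1, 2, 3}" for i
    using assms(4)[OF that] arg_cong[OF rows[OF that], of length] by simp
  show ?thesis
  proof (rule eq_row_filling[OF assms(1) three_rows_lengths[OF assms(2,3) lengths]])
    show "row T i (lo i) (row_len n a i) = X i" if "1 \<le> i" "i \<le> 2*n - 1" for i
    proof (cases "i \<in> {1, 2, 3}")
      case False
      with that(1) have "4 \<le> i" by auto
      with False show ?thesis using assms(2) by (simp add: row_def row_len_eq_0)
    qed (rule rows)
  qed
qed

end

section \<open>Tableaux in \<open>domres\<close>\<close>

definition domres_rows :: "nat \<Rightarrow> (nat \<Rightarrow> nat) \<Rightarrow> nat \<Rightarrow> nat \<Rightarrow> nat \<Rightarrow> nat \<Rightarrow> nat \<Rightarrow> nat \<Rightarrow> nat list" where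
  "domres_rows n a s m p q t i =
     (if i = 1 then replicate (row_len n a 1) 1
      else if i = 2 then replicate s 2 @ replicate m (2*n)
      else if i = 3 then replicate p 3 @ replicate q (2*n - 1) @ replicate t (2*n)
      else [])"

definition domres_tableau :: "nat \<Rightarrow> (nat \<Rightarrow> nat) \<Rightarrow> nat \<Rightarrow> nat \<Rightarrow> nat \<Rightarrow> nat \<Rightarrow> nat \<Rightarrow> nat \<times> nat \<Rightarrow> nat" where
  "domres_tableau n a s m p q t = row_filling (\<lambda>_. 0) (domres_rows n a s m p q t)"

definition domres_blocks ::
    "nat \<Rightarrow> (nat \<Rightarrow> nat) \<Rightarrow> (nat \<Rightarrow> nat) \<Rightarrow> nat \<Rightarrow> nat \<Rightarrow> nat \<Rightarrow> nat \<Rightarrow> nat \<Rightarrow> bool" where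
  "domres_blocks n a b s m p q t \<longleftrightarrow>
     s + m = row_len n a 2 \<and> p + q + t = row_len n a 3 \<and> row_len n a 3 \<le> s \<and>
     row_len n a 2 + t \<le> row_len n a 1 \<and>
     row_len n a 1 = (\<Sum>k\<in>{1..n}. b k) + m + t \<and> s = (\<Sum>k\<in>{2..n}. b k) + q \<and>
     p = (\<Sum>k\<in>{3..n}. b k) \<and> (\<forall>i\<in>{4..n}. (\<Sum>k\<in>{i..n}. b k) = 0)"

context three_rows
begin

lemma domres_row_letters:
  assumes "T \<in> domres n a"
  shows "set (row T 1 0 (row_len n a 1)) \<subseteq> {1}"
    and "set (row T 2 0 (row_len n a 2)) \<subseteq> {2, 2*n}"
    and "set (row T 3 0 (row_len n a 3)) \<subseteq> {3, 2*n - 1, 2*n}"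
proof -
  define X where "X i = row T i 0 (row_len n a i)" for i
  have ss: "ss_filling n (boxes (2*n - 1) (\<lambda>_. 0) (row_len n a)) T"
    and pre: "all_prefixes (sp_dominant n) (rev (X 1) @ rev (X 2) @ rev (X 3))"
    using assms unfolding domres_iff shape_eq_boxes word_of_boxes X_def by simp_all
  have sorted: "sorted (X i)" and letters: "set (X i) \<subseteq> {1..2*n}" if "i \<in> {1, 2, 3}" for i
    unfolding X_def using ss_filling_three_rows[OF ss that] by simp_all
  have above: "\<exists>u \<in> set (X (i - 1)). u < y" if "y \<in> set (X i)" "i \<in> {2, 3}" for i y
  proof -
    have "y \<in> {T (i, c) | c. 0 < c \<and> c \<le> row_len n a i}"
      using that(1) by (simp only: X_def set_row)
    then obtain c where c: "0 < c" "c \<le> row_len n a i" "y = T (i, c)"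
      by blast
    moreover have "c \<le> row_len n a (i - 1)"
      using c(2) row_len_antimono[of "i - 1" i n a] by simp
    ultimately show ?thesis
      using ss that(2) unfolding ss_filling_def mem_boxes_iff
      by (auto simp: X_def set_row)
  qed
  have X1: "set (X 1) \<subseteq> {1}"
    by (rule sp_first_row_letters[OF _ sorted letters]) (use pre in simp_all)
  have low2: "set (X 2) \<subseteq> {2..2*n}"
    using above[of _ 2] X1 letters[of 2] by fastforce
  have X2: "set (X 2) \<subseteq> {2, 2*n}"
    by (rule sp_second_row_letters[where Q = "rev (X 1)" and R = "rev (X 3)", OF _ _ low2])
      (use pre sorted X1 in simp_all)
  have low3: "set (X 3) \<subseteq> {3..2*n}"
    using above[of _ 3] X2 letters[of 3] two_le_n by fastforce
  have "set (X 3) \<subseteq> {3, 2*n - 1, 2*n}"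
    by (rule sp_third_row_letters[where Q = "rev (X 1) @ rev (X 2)" and R = "[]", OF _ _ low3])
      (use pre sorted X1 X2 in auto)
  with X1 X2 show "set (row T 1 0 (row_len n a 1)) \<subseteq> {1}"
    "set (row T 2 0 (row_len n a 2)) \<subseteq> {2, 2*n}"
    "set (row T 3 0 (row_len n a 3)) \<subseteq> {3, 2*n - 1, 2*n}"
    by (simp_all add: X_def)
qed

lemma domres_rows_of_mem:
  assumes "T \<in> domres n a"
  obtains s m p q t where "\<And>i. i \<in> {1, 2, 3} \<Longrightarrow> row T i 0 (row_len n a i) = domres_rows n a s m p q t i"
    and "n = 2 \<Longrightarrow> p = 0"
proof -
  note letters = domres_row_letters[OF assms]
  have ss: "ss_filling n (boxes (2*n - 1) (\<lambda>_. 0) (row_len n a)) T"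
    using assms unfolding domres_iff shape_eq_boxes by simp
  have sorted: "sorted (row T i 0 (row_len n a i))" if "i \<in> {2, 3}" for i
    using ss_filling_three_rows(1)[OF ss, of i] that by simp
  have "\<forall>y \<in> set (row T 1 0 (row_len n a 1)). y = 1"
    using letters(1) by auto
  then have X1: "row T 1 0 (row_len n a 1) = replicate (row_len n a 1) 1"
    by (metis replicate_length_same length_row diff_zero)
  obtain s m where X2: "row T 2 0 (row_len n a 2) = replicate s 2 @ replicate m (2*n)"
    using sorted_two_values[OF sorted letters(2)] two_le_n by auto
  obtain p q t where X3: "row T 3 0 (row_len n a 3) = replicate p 3 @ replicate q (2*n - 1) @ replicate t (2*n)"
    and p: "n = 2 \<Longrightarrow> p = 0"
  proof (cases "n = 2")
    case True
    then have "set (row T 3 0 (row_len n a 3)) \<subseteq> {3, 4}" using letters(3) by auto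
    then obtain q t where "row T 3 0 (row_len n a 3) = replicate q 3 @ replicate t 4"
      using sorted_two_values[OF sorted] by force
    with True that[of 0 q t] show ?thesis by simp
  next
    case False
    then have "3 < 2*n - 1" using two_le_n by simp
    then show ?thesis
      using sorted_three_values[OF sorted letters(3)] that False by force
  qed
  show ?thesis
    by (rule that[of s m p q t]) (use X1 X2 X3 p in \<open>auto simp: domres_rows_def\<close>)
qed

lemma domres_eq_tableau:
  assumes "T \<in> domres n a"
  obtains s m p q t where "T = domres_tableau n a s m p q t"
    and "s + m = row_len n a 2" "p + q + t = row_len n a 3" "n = 2 \<Longrightarrow> p = 0"
proof (rule domres_rows_of_mem[OF assms])
  fix s m p q t
  assume rows: "\<And>i. i \<in> {1, 2, 3} \<Longrightarrow> row T i 0 (row_len n a i) = domres_rows n a s m p q t i"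
    and p: "n = 2 \<Longrightarrow> p = 0"
  have ss: "ss_filling n (boxes (2*n - 1) (\<lambda>_. 0) (row_len n a)) T"
    using assms unfolding domres_iff shape_eq_boxes by simp
  have "T = domres_tableau n a s m p q t"
    unfolding domres_tableau_def
    by (rule eq_row_filling_three_rows[OF ss _ _ _ rows]) (auto simp: domres_rows_def)
  moreover have "s + m = row_len n a 2" "p + q + t = row_len n a 3"
    using arg_cong[OF rows[of 2], of length] arg_cong[OF rows[of 3], of length]
    by (simp_all add: domres_rows_def)
  ultimately show ?thesis
    using that p by blast
qed

lemma row_domres_tableau:
  assumes "s + m = row_len n a 2" "p + q + t = row_len n a 3" "i \<in> {1, 2, 3}"
  shows "row (domres_tableau n a s m p q t) i 0 (row_len n a i) = domres_rows n a s m p q t i"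
proof -
  have "0 + length (domres_rows n a s m p q t i) = row_len n a i"
    using assms by (auto simp: domres_rows_def)
  then show ?thesis
    using row_row_filling[of "\<lambda>_. 0" "domres_rows n a s m p q t" i]
    by (simp add: domres_tableau_def)
qed

lemma word_of_domres_tableau:
  assumes "s + m = row_len n a 2" "p + q + t = row_len n a 3"
  shows "word_of n a (shape n a) (domres_tableau n a s m p q t) =
    blocks [(row_len n a 1, 1), (m, 2*n), (s, 2), (t, 2*n), (q, 2*n - 1), (p, 3)]"
  unfolding shape_eq_boxes word_of_boxes
  using row_domres_tableau[OF assms] by (simp add: domres_rows_def)

text \<open>For \<open>n = 2\<close> the letter \<open>3\<close> is the barred letter \<open>2n-1\<close>, hence the side condition.\<close>
lemma hat_coef_domres_word:
  fixes u v w x y z :: nat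
  assumes "n = 2 \<Longrightarrow> z = 0"
  defines "W \<equiv> blocks [(u, 1), (v, 2*n), (w, 2), (x, 2*n), (y, 2*n - 1), (z, 3)]"
  shows "set W \<subseteq> {1, 2, 3, 2*n - 1, 2*n}"
    and "hat_coef n W 1 = int u - int (v + x)"
    and "hat_coef n W 2 = int w - int y"
    and "3 \<le> n \<Longrightarrow> hat_coef n W 3 = int z"
    and "4 \<le> i \<Longrightarrow> i \<le> n \<Longrightarrow> hat_coef n W i = 0"
proof -
  show set: "set W \<subseteq> {1, 2, 3, 2*n - 1, 2*n}"
    by (auto simp: W_def)
  note h = hat_coef_small_letters[OF two_le_n set]
  show "hat_coef n W 1 = int u - int (v + x)" "hat_coef n W 2 = int w - int y"
    unfolding h(1,2) using assms(1)
    by (auto simp: W_def letters_distinct[simplified] three_eq_iff[simplified])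
  show "hat_coef n W 3 = int z" if "3 \<le> n"
    unfolding h(3)[OF that] using that
    by (auto simp: W_def letters_distinct[simplified] three_eq_iff[simplified])
  show "hat_coef n W i = 0" if "4 \<le> i" "i \<le> n"
    by (rule h(4)[OF that])
qed

lemma sp_dominant_domres_word:
  assumes "n = 2 \<Longrightarrow> z = 0" "w + v + x \<le> u + y" "z + y \<le> w"
  shows "sp_dominant n (blocks [(u, 1), (v, 2*n), (w, 2), (x, 2*n), (y, 2*n - 1), (z, 3)])"
  using hat_coef_domres_word[OF assms(1)] assms(2,3)
  by (intro sp_dominant_small_lettersI[OF two_le_n]) auto

lemma sp_dominant_domres_wordD:
  assumes "sp_dominant n (blocks [(u, 1), (v, 2*n), (w, 2), (x, 2*n), (0, 2*n - 1), (0, 3)])"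
    (is "sp_dominant n ?P")
  shows "w + v + x \<le> u"
proof -
  have "1 \<in> {1..<n}"
    using two_le_n by simp
  then have "hat_coef n ?P (1 + 1) \<le> hat_coef n ?P 1"
    using assms unfolding sp_dominant_def by blast
  then have "hat_coef n ?P 2 \<le> hat_coef n ?P 1"
    by (simp only: one_add_one)
  then show ?thesis
    using hat_coef_domres_word(2,3)[where u = u and v = v and w = w and x = x and y = 0 and z = 0]
    by simp
qed

lemma domres_tableau_column_bound:
  assumes "ss_filling n (shape n a) (domres_tableau n a s m p q t)" and len: "s + m = row_len n a 2"
  shows "row_len n a 3 \<le> s"
proof (rule ccontr)
  let ?T = "domres_tableau n a s m p q t"
  assume "\<not> row_len n a 3 \<le> s"
  then have c: "Suc s \<le> row_len n a 3" "Suc s \<le> row_len n a 2" "m \<noteq> 0"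
    using len row_len_antimono[of 2 3 n a] by auto
  then have "?T (2, Suc s) < ?T (3, Suc s)" "?T (3, Suc s) \<le> 2*n"
    using assms(1) unfolding shape_eq_boxes ss_filling_def mem_boxes_iff by auto
  moreover have "?T (2, Suc s) = 2*n"
    using c len by (simp add: domres_tableau_def row_filling_def domres_rows_def nth_append)
  ultimately show False by simp
qed

lemma domres_blocks_of_mem:
  assumes mem: "domres_tableau n a s m p q t \<in> domres_nu n a b"
    and len: "s + m = row_len n a 2" "p + q + t = row_len n a 3" and p: "n = 2 \<Longrightarrow> p = 0"
  shows "domres_blocks n a b s m p q t"
proof -
  let ?W = "blocks [(row_len n a 1, 1), (m, 2*n), (s, 2), (t, 2*n), (q, 2*n - 1), (p, 3)]"
  note hc = hat_coef_domres_word[where u = "row_len n a 1" and v = m and w = s and x = t and y = q,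
      OF p]
  have ss: "ss_filling n (shape n a) (domres_tableau n a s m p q t)"
    using mem unfolding domres_nu_def domres_iff by auto
  have pre: "all_prefixes (sp_dominant n) ?W"
    and wt: "\<And>i. i \<in> {1..n} \<Longrightarrow> hat_coef n ?W i = int (\<Sum>k\<in>{i..n}. b k)"
    using mem unfolding domres_nu_def domres_iff by (auto simp: word_of_domres_tableau[OF len])
  have "?W = blocks [(row_len n a 1, 1), (m, 2*n), (s, 2), (t, 2*n), (0, 2*n - 1), (0, 3)] @
      blocks [(q, 2*n - 1), (p, 3)]"
    by simp
  then have "s + m + t \<le> row_len n a 1"
    using pre by (metis all_prefixes_appendD sp_dominant_domres_wordD)
  then have "row_len n a 2 + t \<le> row_len n a 1"
    using len(1) by simp
  moreover note domres_tableau_column_bound[OF ss len(1)]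
  moreover have "p = (\<Sum>k\<in>{3..n}. b k)"
  proof (cases "n = 2")
    case False
    then show ?thesis using wt[of 3] hc(4) two_le_n by (simp flip: of_nat_sum)
  qed (simp add: p)
  moreover have "(\<Sum>k\<in>{i..n}. b k) = 0" if "i \<in> {4..n}" for i
    using wt[of i] hc(5)[of i] that by (simp flip: of_nat_sum del: sum_eq_0_iff)
  moreover have "row_len n a 1 = (\<Sum>k\<in>{1..n}. b k) + m + t"
  proof -
    have "hat_coef n ?W 1 = int (\<Sum>k\<in>{1..n}. b k)"
      by (rule wt) (use two_le_n in simp)
    then show ?thesis using hc(2) by linarith
  qed
  moreover have "s = (\<Sum>k\<in>{2..n}. b k) + q"
  proof -
    have "hat_coef n ?W 2 = int (\<Sum>k\<in>{2..n}. b k)"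
      by (rule wt) (use two_le_n in simp)
    then show ?thesis using hc(3) by linarith
  qed
  ultimately show ?thesis
    unfolding domres_blocks_def using len by blast
qed

lemma ss_filling_domres_tableau:
  assumes len: "s + m = row_len n a 2" "p + q + t = row_len n a 3" and "row_len n a 3 \<le> s"
  shows "ss_filling n (shape n a) (domres_tableau n a s m p q t)"
  unfolding shape_eq_boxes domres_tableau_def
proof (rule ss_filling_row_filling_three_rows)
  let ?X = "domres_rows n a s m p q t"
  let ?T = "row_filling (\<lambda>_. 0) ?X"
  show "?X i = []" if "i \<notin> {1, 2, 3}" for i
    using that by (auto simp: domres_rows_def)
  show lengths: "0 + length (?X i) = row_len n a i" if "i \<in> {1, 2, 3}" for i
    using that len by (auto simp: domres_rows_def)
  show "sorted (?X i)" "set (?X i) \<subseteq> {1..2*n}" for i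
    using two_le_n by (auto simp: domres_rows_def sorted_append)
  have entry: "?T (i, c) \<in> set (?X i)" if "(i, c) \<in> boxes (2*n - 1) (\<lambda>_. 0) (row_len n a)" for i c
  proof -
    have "i \<in> {1, 2, 3}" "0 < c" "c \<le> row_len n a i"
      using that unfolding mem_boxes_iff by auto
    then show ?thesis
      using lengths[of i] by (intro row_filling_in_set) auto
  qed
  have two: "?T (2, c) = 2" if "0 < c" "c \<le> s" for c
    using that by (auto simp: row_filling_def domres_rows_def nth_append len(1)[symmetric])
  show "?T (i, c) < ?T (i', c)"
    if "(i, c) \<in> boxes (2*n - 1) (\<lambda>_. 0) (row_len n a)"
      "(i', c) \<in> boxes (2*n - 1) (\<lambda>_. 0) (row_len n a)" "i < i'" for i i' c
  proof -
    have "i' = 2 \<or> i' = 3" "0 < c" "c \<le> row_len n a i'"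
      using that unfolding mem_boxes_iff by auto
    moreover have "i = 1 \<or> i = 2 \<and> i' = 3"
      using that unfolding mem_boxes_iff by auto
    ultimately have "?T (i, c) = 1 \<and> 2 \<le> ?T (i', c) \<or> ?T (i, c) = 2 \<and> 3 \<le> ?T (i', c)"
      using entry[OF that(1)] entry[OF that(2)] two[of c] assms(3) two_le_n
      by (auto simp: domres_rows_def)
    then show ?thesis by auto
  qed
qed simp

lemma all_prefixes_domres_word:
  assumes "domres_blocks n a b s m p q t"
  shows "all_prefixes (sp_dominant n)
    (blocks [(row_len n a 1, 1), (m, 2*n), (s, 2), (t, 2*n), (q, 2*n - 1), (p, 3)])"
proof (rule all_prefixes_blocks[where P = "sp_dominant n", OF sp_dominant_inside_replicate])
  let ?L = "row_len n a"
  have p: "n = 2 \<Longrightarrow> p = 0" and ineq: "m + s + t \<le> ?L 1" "p + q \<le> s"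
    using assms row_len_antimono[of 2 3 n a] by (auto simp: domres_blocks_def)
  have "sp_dominant n (blocks [(0, 1), (0, 2*n), (0, 2), (0, 2*n), (0, 2*n - 1), (0, 3)])"
    "sp_dominant n (blocks [(?L 1, 1), (0, 2*n), (0, 2), (0, 2*n), (0, 2*n - 1), (0, 3)])"
    "sp_dominant n (blocks [(?L 1, 1), (m, 2*n), (0, 2), (0, 2*n), (0, 2*n - 1), (0, 3)])"
    "sp_dominant n (blocks [(?L 1, 1), (m, 2*n), (s, 2), (0, 2*n), (0, 2*n - 1), (0, 3)])"
    "sp_dominant n (blocks [(?L 1, 1), (m, 2*n), (s, 2), (t, 2*n), (0, 2*n - 1), (0, 3)])"
    "sp_dominant n (blocks [(?L 1, 1), (m, 2*n), (s, 2), (t, 2*n), (q, 2*n - 1), (0, 3)])"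
    "sp_dominant n (blocks [(?L 1, 1), (m, 2*n), (s, 2), (t, 2*n), (q, 2*n - 1), (p, 3)])"
    by (rule sp_dominant_domres_word; use ineq p in simp)+
  then show "\<forall>w \<in> set (prefixes
      [(?L 1, 1), (m, 2*n), (s, 2), (t, 2*n), (q, 2*n - 1), (p, 3)]). sp_dominant n (blocks w)"
    by simp
qed

lemma domres_tableau_mem:
  assumes blocks: "domres_blocks n a b s m p q t"
  shows "domres_tableau n a s m p q t \<in> domres_nu n a b"
proof -
  have len: "s + m = row_len n a 2" "p + q + t = row_len n a 3" and "row_len n a 3 \<le> s"
    and p: "n = 2 \<Longrightarrow> p = 0"
    and sums: "row_len n a 1 = (\<Sum>k\<in>{1..n}. b k) + m + t" "s = (\<Sum>k\<in>{2..n}. b k) + q"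
      "p = (\<Sum>k\<in>{3..n}. b k)" "\<And>i. i \<in> {4..n} \<Longrightarrow> (\<Sum>k\<in>{i..n}. b k) = 0"
    using blocks unfolding domres_blocks_def by auto
  let ?W = "blocks [(row_len n a 1, 1), (m, 2*n), (s, 2), (t, 2*n), (q, 2*n - 1), (p, 3)]"
  note hc = hat_coef_domres_word[where u = "row_len n a 1" and v = m and w = s and x = t and y = q,
      OF p]
  have "\<forall>i\<in>{1..n}. hat_coef n ?W i = int (\<Sum>k\<in>{i..n}. b k)"
  proof
    fix i assume i: "i \<in> {1..n}"
    then have "i = 1 \<or> i = 2 \<or> i = 3 \<or> 4 \<le> i" by auto
    then show "hat_coef n ?W i = int (\<Sum>k\<in>{i..n}. b k)"
    proof (elim disjE)
      assume "4 \<le> i"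
      with i show ?thesis using hc(5)[of i] sums(4)[of i] by simp
    qed (use i hc(2-4) sums(1-3) in simp_all)
  qed
  moreover note ss_filling_domres_tableau[OF len \<open>row_len n a 3 \<le> s\<close>]
  moreover note all_prefixes_domres_word[OF blocks]
  ultimately show ?thesis
    unfolding domres_nu_def mem_Collect_eq domres_iff word_of_domres_tableau[OF len] by (intro conjI)
qed

lemma domres_blocks_unique:
  assumes "domres_blocks n a b s m p q t" "domres_blocks n a b s' m' p' q' t'"
  shows "(s, m, p, q, t) = (s', m', p', q', t')"
proof -
  have "q = q'"
    using assms unfolding domres_blocks_def by linarith
  with assms show ?thesis
    unfolding domres_blocks_def by auto
qed

end

section \<open>Littlewood-Richardson fillings\<close>

definition omega2_multiple :: "nat \<Rightarrow> nat \<Rightarrow> nat" where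
  "omega2_multiple k i = (if i = 2 then k else 0)"

definition lr_rows :: "nat \<Rightarrow> (nat \<Rightarrow> nat) \<Rightarrow> nat \<Rightarrow> nat \<Rightarrow> nat \<Rightarrow> nat \<Rightarrow> nat \<Rightarrow> nat list" where
  "lr_rows n a k x y z i =
     (if i = 1 then replicate (row_len n a 1 - k) 1
      else if i = 2 then replicate (row_len n a 2 - k) 2
      else if i = 3 then replicate x 1 @ replicate y 2 @ replicate z 3
      else [])"

definition lr_tableau :: "nat \<Rightarrow> (nat \<Rightarrow> nat) \<Rightarrow> nat \<Rightarrow> nat \<Rightarrow> nat \<Rightarrow> nat \<Rightarrow> nat \<times> nat \<Rightarrow> nat" where
  "lr_tableau n a k x y z = row_filling (\<lambda>i. if i \<le> 2 then k else 0) (lr_rows n a k x y z)"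

definition lr_blocks :: "nat \<Rightarrow> (nat \<Rightarrow> nat) \<Rightarrow> (nat \<Rightarrow> nat) \<Rightarrow> nat \<Rightarrow> nat \<Rightarrow> nat \<Rightarrow> nat \<Rightarrow> bool" where
  "lr_blocks n a b k x y z \<longleftrightarrow>
     k \<le> row_len n a 2 \<and> row_len n a 1 + x = (\<Sum>i\<in>{1..n}. b i) + k \<and>
     row_len n a 2 + y = (\<Sum>i\<in>{2..n}. b i) + k \<and> z = (\<Sum>i\<in>{3..n}. b i) \<and>
     x + y + z = row_len n a 3 \<and> x + y \<le> k \<and> z + k \<le> row_len n a 2 \<and>
     row_len n a 2 + y \<le> row_len n a 1 \<and> (\<forall>i\<in>{4..n}. (\<Sum>k\<in>{i..n}. b k) = 0)"

context three_rows
begin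

lemma row_len_omega2_multiple: "row_len n (omega2_multiple k) r = (if r \<le> 2 then k else 0)"
proof -
  have "row_len n (omega2_multiple k) r = (\<Sum>i\<in>{r..2*n - 1}. if i = 2 then k else 0)"
    by (simp add: row_len_def omega2_multiple_def)
  also have "\<dots> = (if 2 \<in> {r..2*n - 1} then k else 0)"
    by (rule sum.delta) simp
  finally show ?thesis
    using two_le_n by auto
qed

lemma skew_shape_omega2_multiple:
  "shape n a - shape n (omega2_multiple k) = boxes (2*n - 1) (\<lambda>i. if i \<le> 2 then k else 0) (row_len n a)"
  unfolding shape_diff_eq_boxes row_len_omega2_multiple ..

text \<open>Since \<open>\<lambda>\<close> has at most three rows, an even shape inside it consists of columns of
  length two only.\<close>
lemma even_subshape_coefficient:
  assumes "dom_weight n eta" "shape n eta \<subseteq> shape n a" "even_shape eta" "i \<noteq> 2"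
  shows "eta i = 0"
proof (rule ccontr)
  assume "eta i \<noteq> 0"
  moreover have "(i = 0 \<or> 2*n \<le> i) \<longrightarrow> eta i = 0"
    using assms(1) unfolding dom_weight_def by (rule spec)
  moreover have "odd i \<longrightarrow> eta i = 0"
    using assms(3) unfolding even_shape_def by (rule spec)
  ultimately have "\<not> (i = 0 \<or> 2*n \<le> i)" "even i"
    by auto
  with \<open>i \<noteq> 2\<close> have i: "4 \<le> i" "i \<le> 2*n - 1"
    by (auto elim!: evenE)
  have "eta i \<le> row_len n eta i"
    unfolding row_len_def using i by (intro member_le_sum) auto
  with \<open>eta i \<noteq> 0\<close> i have "(i, 1) \<in> shape n eta"
    unfolding shape_def by simp
  then have "(i, 1) \<in> shape n a"
    using assms(2) by blast
  with row_len_eq_0[OF i(1)] show False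
    unfolding shape_def by simp
qed

lemma even_subshape_eq_omega2_multiple:
  assumes "dom_weight n eta" "shape n eta \<subseteq> shape n a" "even_shape eta"
  shows "eta = omega2_multiple (eta 2)" and "eta 2 \<le> row_len n a 2"
proof -
  show eta: "eta = omega2_multiple (eta 2)"
  proof
    fix i
    show "eta i = omega2_multiple (eta 2) i"
      using even_subshape_coefficient[OF assms, of i] by (cases "i = 2") (simp_all add: omega2_multiple_def)
  qed
  show "eta 2 \<le> row_len n a 2"
  proof (cases "eta 2 = 0")
    case False
    have "row_len n eta 2 = row_len n (omega2_multiple (eta 2)) 2"
      by (rule arg_cong[OF eta])
    also have "\<dots> = eta 2"
      by (simp add: row_len_omega2_multiple)
    finally have "row_len n eta 2 = eta 2" .
    with False two_le_n have "(2, eta 2) \<in> shape n eta"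
      unfolding shape_def by simp
    with assms(2) show ?thesis
      unfolding shape_def by blast
  qed simp
qed

lemma omega2_multiple_subshape:
  assumes "k \<le> row_len n a 2"
  shows "shape n (omega2_multiple k) \<subseteq> shape n a"
proof
  fix x assume "x \<in> shape n (omega2_multiple k)"
  then obtain r c where x: "x = (r, c)" "1 \<le> r" "r \<le> 2*n - 1" "1 \<le> c"
    and c: "c \<le> (if r \<le> 2 then k else 0)"
    by (auto simp: shape_def row_len_omega2_multiple)
  then have "r \<le> 2" by (cases "r \<le> 2") auto
  then have "c \<le> row_len n a r"
    using c assms row_len_antimono[of r 2 n a] by simp
  with x show "x \<in> shape n a" by (auto simp: shape_def)
qed

lemma admissible_weights_eq:
  "{eta. dom_weight n eta \<and> shape n eta \<subseteq> shape n a \<and> even_shape eta} =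
     omega2_multiple ` {..row_len n a 2}"
proof (intro equalityI subsetI)
  fix eta assume "eta \<in> {eta. dom_weight n eta \<and> shape n eta \<subseteq> shape n a \<and> even_shape eta}"
  then have "eta = omega2_multiple (eta 2)" "eta 2 \<le> row_len n a 2"
    using even_subshape_eq_omega2_multiple by auto
  then show "eta \<in> omega2_multiple ` {..row_len n a 2}" by blast
next
  fix eta assume "eta \<in> omega2_multiple ` {..row_len n a 2}"
  then obtain k where k: "k \<le> row_len n a 2" and eta: "eta = omega2_multiple k" by auto
  then show "eta \<in> {eta. dom_weight n eta \<and> shape n eta \<subseteq> shape n a \<and> even_shape eta}"
    using two_le_n omega2_multiple_subshape[OF k]
    by (auto simp: dom_weight_def even_shape_def omega2_multiple_def)
qed

lemma lr_row_letters:
  assumes "T \<in> LR n a (omega2_multiple k) b" "k \<le> row_len n a 2"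
  shows "set (row T 1 k (row_len n a 1)) \<subseteq> {1}"
    and "set (row T 2 k (row_len n a 2)) \<subseteq> {2}"
    and "set (row T 3 0 (row_len n a 3)) \<subseteq> {1, 2, 3}"
proof -
  let ?lo = "\<lambda>i. if i \<le> 2 then k else 0"
  define X where "X i = row T i (?lo i) (row_len n a i)" for i
  have ss: "ss_filling n (boxes (2*n - 1) ?lo (row_len n a)) T"
    and pre: "all_prefixes (gl_dominant n) (rev (X 1) @ rev (X 2) @ rev (X 3))"
    using assms(1)
    unfolding LR_def mem_Collect_eq skew_shape_omega2_multiple word_of_boxes dominant_word_iff X_def
    by simp_all
  have sorted: "sorted (X i)" and letters: "set (X i) \<subseteq> {1..2*n}" if "i \<in> {1, 2, 3}" for i
    unfolding X_def using ss_filling_three_rows[OF ss that] by simp_all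
  have X1: "set (X 1) \<subseteq> {1..0 + 1}"
    by (rule gl_row_letters[where Q = "[]", OF _ _ letters]) (use pre sorted in simp_all)
  have low2: "set (X 2) \<subseteq> {2..2*n}"
  proof
    fix y assume "y \<in> set (X 2)"
    then have "y \<in> {T (2, c) | c. k < c \<and> c \<le> row_len n a 2}"
      by (simp only: X_def set_row) simp
    then obtain c where c: "k < c" "c \<le> row_len n a 2" "y = T (2, c)"
      by blast
    moreover have "c \<le> row_len n a 1"
      using c(2) row_len_antimono[of 1 2 n a] by simp
    ultimately have "T (1, c) < y" "T (1, c) \<in> set (X 1)"
      using ss unfolding ss_filling_def mem_boxes_iff by (auto simp: X_def set_row)
    then show "y \<in> {2..2*n}"
      using X1 letters[of 2] \<open>y \<in> set (X 2)\<close> by fastforce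
  qed
  have X2: "set (X 2) \<subseteq> {2..1 + 1}"
    by (rule gl_row_letters[where Q = "rev (X 1)" and R = "rev (X 3)", OF _ _ low2])
      (use pre sorted X1 in simp_all)
  have X3: "set (X 3) \<subseteq> {1..2 + 1}"
    by (rule gl_row_letters[where Q = "rev (X 1) @ rev (X 2)" and R = "[]", OF _ _ letters])
      (use pre sorted X1 X2 in auto)
  show "set (row T 1 k (row_len n a 1)) \<subseteq> {1}"
    "set (row T 2 k (row_len n a 2)) \<subseteq> {2}"
    "set (row T 3 0 (row_len n a 3)) \<subseteq> {1, 2, 3}"
    using X1 X2 X3 by (auto simp: X_def)
qed

lemma lr_rows_of_mem:
  assumes "T \<in> LR n a (omega2_multiple k) b" "k \<le> row_len n a 2"
  obtains x y z
  where "\<And>i. i \<in> {1, 2, 3} \<Longrightarrow> row T i (if i \<le> 2 then k else 0) (row_len n a i) = lr_rows n a k x y z i"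
proof -
  note letters = lr_row_letters[OF assms]
  have ss: "ss_filling n (boxes (2*n - 1) (\<lambda>i. if i \<le> 2 then k else 0) (row_len n a)) T"
    using assms(1) unfolding LR_def mem_Collect_eq skew_shape_omega2_multiple by simp
  have "\<forall>v \<in> set (row T 1 k (row_len n a 1)). v = 1" "\<forall>v \<in> set (row T 2 k (row_len n a 2)). v = 2"
    using letters(1,2) by auto
  then have X1: "row T 1 k (row_len n a 1) = replicate (row_len n a 1 - k) 1"
    and X2: "row T 2 k (row_len n a 2) = replicate (row_len n a 2 - k) 2"
    by (metis replicate_length_same length_row)+
  have "sorted (row T 3 0 (row_len n a 3))"
    using ss_filling_three_rows(1)[OF ss, of 3] by simp
  then obtain x y z where X3: "row T 3 0 (row_len n a 3) = replicate x 1 @ replicate y 2 @ replicate z 3"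
    using sorted_three_values[OF _ letters(3)] by force
  show ?thesis
  proof (rule that)
    fix i :: nat assume "i \<in> {1, 2, 3}"
    then consider "i = 1" | "i = 2" | "i = 3" by blast
    then show "row T i (if i \<le> 2 then k else 0) (row_len n a i) = lr_rows n a k x y z i"
      by cases (use X1 X2 X3 in \<open>simp_all add: lr_rows_def\<close>)
  qed
qed

lemma lr_eq_tableau:
  assumes mem: "T \<in> LR n a (omega2_multiple k) b" and k: "k \<le> row_len n a 2"
  obtains x y z where "T = lr_tableau n a k x y z" "x + y + z = row_len n a 3"
proof (rule lr_rows_of_mem[OF assms])
  fix x y z
  assume rows: "\<And>i. i \<in> {1, 2, 3} \<Longrightarrow>
    row T i (if i \<le> 2 then k else 0) (row_len n a i) = lr_rows n a k x y z i"
  have ss: "ss_filling n (boxes (2*n - 1) (\<lambda>i. if i \<le> 2 then k else 0) (row_len n a)) T"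
    using mem unfolding LR_def mem_Collect_eq skew_shape_omega2_multiple by simp
  have "T = lr_tableau n a k x y z"
    unfolding lr_tableau_def
  proof (rule eq_row_filling_three_rows[OF ss _ _ _ rows])
    show "lr_rows n a k x y z i = []" if "i \<notin> {1, 2, 3}" for i
      using that by (simp add: lr_rows_def)
    show "(if i \<le> 2 then k else 0) \<le> row_len n a i" if "i \<in> {1, 2, 3}" for i
      using that k row_len_antimono[of 1 2 n a] by auto
  qed simp
  moreover have "x + y + z = row_len n a 3"
    using arg_cong[OF rows[of 3], of length] by (simp add: lr_rows_def)
  ultimately show ?thesis
    using that by blast
qed

lemma row_lr_tableau:
  assumes "k \<le> row_len n a 2" "x + y + z = row_len n a 3" "i \<in> {1, 2, 3}"
  shows "row (lr_tableau n a k x y z) i (if i \<le> 2 then k else 0) (row_len n a i) = lr_rows n a k x y z i"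
proof -
  have "(if i \<le> 2 then k else 0) + length (lr_rows n a k x y z i) = row_len n a i"
    using assms row_len_antimono[of 1 2 n a] by (auto simp: lr_rows_def)
  then show ?thesis
    using row_row_filling[of "\<lambda>i. if i \<le> 2 then k else 0" "lr_rows n a k x y z" i]
    by (simp add: lr_tableau_def)
qed

lemma word_of_lr_tableau:
  assumes "k \<le> row_len n a 2" "x + y + z = row_len n a 3"
  shows "word_of n a (shape n a - shape n (omega2_multiple k)) (lr_tableau n a k x y z) =
    blocks [(row_len n a 1 - k, 1), (row_len n a 2 - k, 2), (z, 3), (y, 2), (x, 1)]"
  unfolding skew_shape_omega2_multiple word_of_boxes
  using row_lr_tableau[OF assms, where i = 1] row_lr_tableau[OF assms, where i = 2]
    row_lr_tableau[OF assms, where i = 3]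
  by (simp add: lr_rows_def)

lemma lr_tableau_column_bound:
  assumes "ss_filling n (shape n a - shape n (omega2_multiple k)) (lr_tableau n a k x y z)"
    and k: "k \<le> row_len n a 2" and len: "x + y + z = row_len n a 3"
  shows "x + y \<le> k"
proof (rule ccontr)
  let ?T = "lr_tableau n a k x y z"
  let ?B = "boxes (2*n - 1) (\<lambda>i. if i \<le> 2 then k else 0) (row_len n a)"
  assume "\<not> x + y \<le> k"
  then have c: "k < x + y" "x + y \<le> row_len n a 3" "x + y \<le> row_len n a 2"
    using len row_len_antimono[of 2 3 n a] by auto
  then have box: "(2, x + y) \<in> ?B" "(3, x + y) \<in> ?B"
    unfolding mem_boxes_iff by auto
  have col: "?T (r, c) < ?T (r', c)" if "(r, c) \<in> ?B" "(r', c) \<in> ?B" "r < r'" for r r' c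
    using assms(1) that unfolding skew_shape_omega2_multiple ss_filling_def by blast
  have "?T (2, x + y) < ?T (3, x + y)"
    by (rule col[OF box]) simp
  moreover have "?T (2, x + y) = 2"
    using c k by (simp add: lr_tableau_def row_filling_def lr_rows_def)
  moreover have "?T (3, x + y) \<le> 2"
    using c len by (auto simp: lr_tableau_def row_filling_def lr_rows_def nth_append)
  ultimately show False by simp
qed

lemma lr_blocks_of_mem:
  assumes mem: "lr_tableau n a k x y z \<in> LR n a (omega2_multiple k) b"
    and k: "k \<le> row_len n a 2" and len: "x + y + z = row_len n a 3"
  shows "lr_blocks n a b k x y z"
proof -
  let ?W = "blocks [(row_len n a 1 - k, 1), (row_len n a 2 - k, 2), (z, 3), (y, 2), (x, 1)]"
  have k1: "k \<le> row_len n a 1"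
    using k row_len_antimono[of 1 2 n a] by simp
  have ss: "ss_filling n (shape n a - shape n (omega2_multiple k)) (lr_tableau n a k x y z)"
    using mem unfolding LR_def by simp
  have pre: "all_prefixes (gl_dominant n) ?W"
    and cnt: "\<And>i. i \<in> {1..2*n} \<Longrightarrow> count_list ?W i = (if i \<le> n then \<Sum>k\<in>{i..n}. b k else 0)"
    using mem unfolding LR_def mem_Collect_eq dominant_word_iff word_of_lr_tableau[OF k len]
    by simp_all
  define P :: "nat list" where "P = blocks [(row_len n a 1 - k, 1), (row_len n a 2 - k, 2), (z, 3)]"
  have "?W = P @ blocks [(y, 2), (x, 1)]" "?W = (P @ blocks [(y, 2)]) @ blocks [(x, 1)]"
    by (simp_all add: P_def)
  then have "gl_dominant n P" "gl_dominant n (P @ blocks [(y, 2)])"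
    using pre by (metis all_prefixes_appendD)+
  then have "z + k \<le> row_len n a 2" "row_len n a 2 + y \<le> row_len n a 1"
    using gl_dominant_small_lettersD[OF _ two_le_n] k k1 by (fastforce simp: P_def)+
  moreover note lr_tableau_column_bound[OF ss k len]
  moreover have "row_len n a 1 + x = (\<Sum>i\<in>{1..n}. b i) + k"
    using cnt[of 1] two_le_n k1 by simp
  moreover have "row_len n a 2 + y = (\<Sum>i\<in>{2..n}. b i) + k"
    using cnt[of 2] two_le_n k by simp
  moreover have "z = (\<Sum>i\<in>{3..n}. b i)"
    using cnt[of 3] two_le_n by (cases "n = 2") simp_all
  moreover have "(\<Sum>k\<in>{i..n}. b k) = 0" if "i \<in> {4..n}" for i
    using cnt[of i] that by simp
  ultimately show ?thesis
    unfolding lr_blocks_def using k len by blast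
qed

lemma ss_filling_lr_tableau:
  assumes k: "k \<le> row_len n a 2" and len: "x + y + z = row_len n a 3" and "x + y \<le> k"
  shows "ss_filling n (shape n a - shape n (omega2_multiple k)) (lr_tableau n a k x y z)"
  unfolding skew_shape_omega2_multiple lr_tableau_def
proof (rule ss_filling_row_filling_three_rows)
  let ?lo = "\<lambda>i. if i \<le> 2 then k else 0"
  let ?X = "lr_rows n a k x y z"
  let ?T = "row_filling ?lo ?X"
  show "?X i = []" if "i \<notin> {1, 2, 3}" for i
    using that by (simp add: lr_rows_def)
  show lengths: "?lo i + length (?X i) = row_len n a i" if i: "i \<in> {1, 2, 3}" for i
  proof -
    consider "i = 1" | "i = 2" | "i = 3" using i by auto
    then show ?thesis
      by cases (use k len row_len_antimono[of 1 2 n a] in \<open>simp_all add: lr_rows_def\<close>)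
  qed
  show "sorted (?X i)" for i
    by (auto simp: lr_rows_def sorted_append)
  have "set (?X i) \<subseteq> {1, 2, 3}" for i
  proof -
    consider "i = 1" | "i = 2" | "i = 3" | "i \<notin> {1, 2, 3}" by blast
    then show ?thesis
      by cases (simp_all add: lr_rows_def set_replicate_conv_if)
  qed
  then show "set (?X i) \<subseteq> {1..2*n}" for i
    using two_le_n by fastforce
  have entry: "?T (i, c) \<in> set (?X i)" if "(i, c) \<in> boxes (2*n - 1) ?lo (row_len n a)" for i c
  proof -
    have "i \<in> {1, 2, 3}" "?lo i < c" "c \<le> row_len n a i"
      using that unfolding mem_boxes_iff by auto
    then show ?thesis
      using lengths[of i] by (intro row_filling_in_set) auto
  qed
  have three: "?T (3, c) = 3" if "k < c" "c \<le> row_len n a 3" for c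
    using that len assms(3) by (auto simp: row_filling_def lr_rows_def nth_append)
  show "?T (i, c) < ?T (i', c)"
    if "(i, c) \<in> boxes (2*n - 1) ?lo (row_len n a)"
      "(i', c) \<in> boxes (2*n - 1) ?lo (row_len n a)" "i < i'" for i i' c
  proof -
    have "i = 1 \<or> i = 2" "i' = 2 \<or> i' = 3" "k < c" "c \<le> row_len n a i'"
      using that unfolding mem_boxes_iff by auto
    then show ?thesis
      using entry[OF that(1)] entry[OF that(2)] three[of c] that(3) by (auto simp: lr_rows_def)
  qed
qed simp

lemma all_prefixes_lr_word:
  assumes "lr_blocks n a b k x y z"
  shows "all_prefixes (gl_dominant n)
    (blocks [(row_len n a 1 - k, 1), (row_len n a 2 - k, 2), (z, 3), (y, 2), (x, 1)])"
proof (rule all_prefixes_blocks[where P = "gl_dominant n", OF gl_dominant_inside_replicate])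
  let ?L = "row_len n a"
  have ineq: "k \<le> ?L 2" "z + k \<le> ?L 2" "?L 2 + y \<le> ?L 1"
    using assms by (auto simp: lr_blocks_def)
  have "gl_dominant n []"
    "gl_dominant n (blocks [(?L 1 - k, 1)])"
    "gl_dominant n (blocks [(?L 1 - k, 1), (?L 2 - k, 2)])"
    "gl_dominant n (blocks [(?L 1 - k, 1), (?L 2 - k, 2), (z, 3)])"
    "gl_dominant n (blocks [(?L 1 - k, 1), (?L 2 - k, 2), (z, 3), (y, 2)])"
    "gl_dominant n (blocks [(?L 1 - k, 1), (?L 2 - k, 2), (z, 3), (y, 2), (x, 1)])"
    by (rule gl_dominant_small_lettersI; use ineq in auto)+
  then show "\<forall>w \<in> set (prefixes
      [(?L 1 - k, 1), (?L 2 - k, 2), (z, 3), (y, 2), (x, 1)]). gl_dominant n (blocks w)"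
    by simp
qed

lemma lr_tableau_mem:
  assumes blocks: "lr_blocks n a b k x y z"
  shows "lr_tableau n a k x y z \<in> LR n a (omega2_multiple k) b"
proof -
  have k: "k \<le> row_len n a 2" and len: "x + y + z = row_len n a 3" and "x + y \<le> k"
    using blocks by (auto simp: lr_blocks_def)
  have k1: "k \<le> row_len n a 1"
    using k row_len_antimono[of 1 2 n a] by simp
  let ?W = "blocks [(row_len n a 1 - k, 1), (row_len n a 2 - k, 2), (z, 3), (y, 2), (x, 1)]"
  have "count_list ?W i = (if i \<le> n then \<Sum>k\<in>{i..n}. b k else 0)" if "i \<in> {1..2*n}" for i
  proof -
    have "i = 1 \<or> i = 2 \<or> i = 3 \<or> 4 \<le> i" using that by auto
    then show ?thesis
      using blocks k k1 two_le_n that by (auto simp: lr_blocks_def)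
  qed
  then show ?thesis
    using ss_filling_lr_tableau[OF k len \<open>x + y \<le> k\<close>] all_prefixes_lr_word[OF blocks]
    unfolding LR_def mem_Collect_eq dominant_word_iff word_of_lr_tableau[OF k len] by blast
qed

lemma lr_blocks_unique:
  assumes "lr_blocks n a b k x y z" "lr_blocks n a b k' x' y' z'"
  shows "(k, x, y, z) = (k', x', y', z')"
proof -
  have "k = k'"
    using assms unfolding lr_blocks_def by linarith
  with assms show ?thesis
    unfolding lr_blocks_def by auto
qed

end

section \<open>The bijection\<close>

lemma ex_bij_betw_subsingletons:
  assumes "\<forall>x\<in>A. \<forall>y\<in>A. x = y" "\<forall>x\<in>B. \<forall>y\<in>B. x = y" "A = {} \<longleftrightarrow> B = {}"
  shows "\<exists>f. bij_betw f A B"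
proof (cases "A = {}")
  case False
  then obtain x y where "A = {x}" "B = {y}"
    using assms by blast
  then have "bij_betw (\<lambda>_. y) A B"
    by (simp add: bij_betw_def)
  then show ?thesis by blast
qed (use assms(3) in \<open>auto simp: bij_betw_def\<close>)

context three_rows
begin

lemma domres_nu_eq:
  "domres_nu n a b = {domres_tableau n a s m p q t | s m p q t. domres_blocks n a b s m p q t}"
proof (intro equalityI subsetI)
  fix T assume T: "T \<in> domres_nu n a b"
  then have "T \<in> domres n a" by (simp add: domres_nu_def)
  then show "T \<in> {domres_tableau n a s m p q t | s m p q t. domres_blocks n a b s m p q t}"
  proof (rule domres_eq_tableau)
    fix s m p q t
    assume "T = domres_tableau n a s m p q t"
      and "s + m = row_len n a 2" "p + q + t = row_len n a 3" "n = 2 \<Longrightarrow> p = 0"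
    with T show ?thesis using domres_blocks_of_mem by blast
  qed
qed (auto intro: domres_tableau_mem)

lemma lr_union_eq:
  "(\<Union>eta\<in>{eta. dom_weight n eta \<and> shape n eta \<subseteq> shape n a \<and> even_shape eta}. LR n a eta b) =
     {lr_tableau n a k x y z | k x y z. lr_blocks n a b k x y z}"
proof (intro equalityI subsetI)
  fix T assume "T \<in> (\<Union>eta\<in>{eta. dom_weight n eta \<and> shape n eta \<subseteq> shape n a \<and> even_shape eta}. LR n a eta b)"
  then obtain k where k: "k \<le> row_len n a 2" and T: "T \<in> LR n a (omega2_multiple k) b"
    unfolding admissible_weights_eq by auto
  from T k show "T \<in> {lr_tableau n a k x y z | k x y z. lr_blocks n a b k x y z}"
  proof (rule lr_eq_tableau)
    fix x y z assume "T = lr_tableau n a k x y z" "x + y + z = row_len n a 3"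
    with T k show ?thesis using lr_blocks_of_mem by blast
  qed
next
  fix T assume "T \<in> {lr_tableau n a k x y z | k x y z. lr_blocks n a b k x y z}"
  then obtain k x y z where T: "T = lr_tableau n a k x y z" and blocks: "lr_blocks n a b k x y z"
    by blast
  then have "k \<le> row_len n a 2" by (simp add: lr_blocks_def)
  with T lr_tableau_mem[OF blocks]
  show "T \<in> (\<Union>eta\<in>{eta. dom_weight n eta \<and> shape n eta \<subseteq> shape n a \<and> even_shape eta}. LR n a eta b)"
    unfolding admissible_weights_eq by blast
qed

text \<open>The correspondence of block sizes underlying the bijection: the \<open>2n\<close>'s and
  \<open>(2n-1)\<close>'s of a \<open>domres\<close> tableau become the removed columns of height two.\<close>
lemma ex_domres_blocks_iff_ex_lr_blocks:
  "(\<exists>s m p q t. domres_blocks n a b s m p q t) \<longleftrightarrow> (\<exists>k x y z. lr_blocks n a b k x y z)"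
proof
  assume "\<exists>s m p q t. domres_blocks n a b s m p q t"
  then obtain s m p q t where "domres_blocks n a b s m p q t" by blast
  then have "lr_blocks n a b (m + q + t) q t p"
    unfolding domres_blocks_def lr_blocks_def by linarith
  then show "\<exists>k x y z. lr_blocks n a b k x y z" by blast
next
  assume "\<exists>k x y z. lr_blocks n a b k x y z"
  then obtain k x y z where "lr_blocks n a b k x y z" by blast
  then have "domres_blocks n a b (row_len n a 2 - (k - x - y)) (k - x - y) z x y"
    unfolding domres_blocks_def lr_blocks_def by linarith
  then show "\<exists>s m p q t. domres_blocks n a b s m p q t" by blast
qed

lemma domres_nu_subsingleton: "\<forall>T \<in> domres_nu n a b. \<forall>T' \<in> domres_nu n a b. T = T'"
  unfolding domres_nu_eq using domres_blocks_unique by fastforce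

lemma lr_union_subsingleton:
  "\<forall>T \<in> (\<Union>eta\<in>{eta. dom_weight n eta \<and> shape n eta \<subseteq> shape n a \<and> even_shape eta}. LR n a eta b).
   \<forall>T' \<in> (\<Union>eta\<in>{eta. dom_weight n eta \<and> shape n eta \<subseteq> shape n a \<and> even_shape eta}. LR n a eta b).
     T = T'"
  unfolding lr_union_eq using lr_blocks_unique by fastforce

lemma domres_nu_empty_iff:
  "domres_nu n a b = {} \<longleftrightarrow>
     (\<Union>eta\<in>{eta. dom_weight n eta \<and> shape n eta \<subseteq> shape n a \<and> even_shape eta}. LR n a eta b) = {}"
  unfolding domres_nu_eq lr_union_eq using ex_domres_blocks_iff_ex_lr_blocks[of b] by blast

end

theorem proposition6p6:
  fixes n :: nat and a b :: "nat \<Rightarrow> nat"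
  assumes "n \<ge> 2"
    and "n = 2 \<or> (\<forall>i\<in>{4..2*n-1}. a i = 0)"
  shows "\<exists>f. bij_betw f (domres_nu n a b)
           (\<Union>eta\<in>{eta. dom_weight n eta \<and> shape n eta \<subseteq> shape n a \<and> even_shape eta}.
              LR n a eta b)"
proof -
  have "row_len n a r = 0" if "4 \<le> r" for r
    using assms(2) that unfolding row_len_def by (auto intro!: sum.neutral)
  then interpret three_rows n a
    using assms(1) by unfold_locales
  show ?thesis
    by (rule ex_bij_betw_subsingletons[OF domres_nu_subsingleton lr_union_subsingleton
          domres_nu_empty_iff])
qed

end
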